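(* Let $d\geq 2$ be a fixed odd integer, $c_0\geq 1$ a constant, $C_1=2^{10d}c_0$, $m=m(n)$, $p_1=(\log (mn))^{1/d}/(m^{(d-1)/(2d)}n^{(d-1)/(2d)})$ with $p_1 n\geq p_1 m\geq (\log n)^4$. Then with probability at least $1-n^{-\Omega(1)}$, in $G(m,n,C_1p_1)$ with parts $U,V$, every two distinct vertices of $V$ are connected by at least $2^{10d}c_0\log n$ internally vertex-disjoint paths of length exactly $d+1$.
   Context: $G(m,n,p)$ is the random bipartite graph with parts $U,V$, $|U|=m$, $|V|=n$, each edge between $U$ and $V$ present independently with probability $p$. $\log$ is the logarithm to base $2$; asymptotic notation is as $n\to\infty$. *)

theory Defs
  imports "HOL-Probability.Probability"
begin

text \<open>Random bipartite graph G(m,n,p): parts U = {0..<m} (vertices Inl u) and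
 V = {0..<n} (vertices Inr v).\<close>

definition random_bip :: "nat \<Rightarrow> nat \<Rightarrow> real \<Rightarrow> (nat \<times> nat \<Rightarrow> bool) pmf" where
  "random_bip m n p = Pi_pmf ({0..<m} \<times> {0..<n}) False (\<lambda>_. bernoulli_pmf p)"

fun bip_adj :: "nat \<Rightarrow> nat \<Rightarrow> (nat \<times> nat \<Rightarrow> bool) \<Rightarrow> nat + nat \<Rightarrow> nat + nat \<Rightarrow> bool" where
  "bip_adj m n G (Inl u) (Inr v) = (u < m \<and> v < n \<and> G (u, v))"
| "bip_adj m n G (Inr v) (Inl u) = (u < m \<and> v < n \<and> G (u, v))"
| "bip_adj m n G _ _ = False"

definition is_path :: "nat \<Rightarrow> nat \<Rightarrow> (nat \<times> nat \<Rightarrow> bool) \<Rightarrow> nat \<Rightarrow> nat + nat \<Rightarrow> nat + nat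
    \<Rightarrow> (nat + nat) list \<Rightarrow> bool" where
  "is_path m n G L x y p \<longleftrightarrow> length p = L + 1 \<and> distinct p \<and> hd p = x \<and> last p = y \<and>
     (\<forall>i < L. bip_adj m n G (p ! i) (p ! Suc i))"

definition internal :: "'a list \<Rightarrow> 'a set" where
  "internal p = set (butlast (tl p))"

definition many_disjoint_paths :: "nat \<Rightarrow> nat \<Rightarrow> (nat \<times> nat \<Rightarrow> bool) \<Rightarrow> nat \<Rightarrow> real
    \<Rightarrow> nat + nat \<Rightarrow> nat + nat \<Rightarrow> bool" where
  "many_disjoint_paths m n G L k x y \<longleftrightarrow>
     (\<exists>P. finite P \<and> real (card P) \<ge> k \<and> (\<forall>p\<in>P. is_path m n G L x y p) \<and>
        (\<forall>p\<in>P. \<forall>q\<in>P. p \<noteq> q \<longrightarrow> internal p \<inter> internal q = {}))"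

end

theory Submission
  imports Defs "HOL-Real_Asymp.Real_Asymp"
begin

text \<open>Write \<open>d = 2r + 1\<close>. Fix distinct \<open>x, y \<in> V\<close> and a set \<open>W\<close> of fewer than \<open>d k\<close> forbidden
vertices. Split \<open>U\<close> into \<open>r + 1\<close> residue classes and \<open>V\<close> into \<open>r\<close> residue classes and arrange
them, minus \<open>W\<close>, as layers \<open>{x}, U\<^sub>0, V\<^sub>0, U\<^sub>1, \<dots>, V\<^sub>r\<^sub>-\<^sub>1, U\<^sub>r, {y}\<close>. Exploring from \<open>x\<close> layer by
layer, each step only looks at the edges between two consecutive layers, which are independent
of everything seen before; given the reached part \<open>R\<close> of one layer, the reached part of the next
one is a binomial sample with success probability \<open>1 - (1 - p)^|R|\<close>. A Chernoff bound shows that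
the reached sets grow like \<open>(N p)^j\<close> until they are a constant fraction of their layer, and the
last layer \<open>{y}\<close> is reached except with probability \<open>exp (-\<Omega>(p (m p)^(r+1) (n p)^r)) = exp (-\<Omega>(log^4 n))\<close>.
A union bound over \<open>x\<close>, \<open>y\<close> and the at most \<open>(m + n + 1)^(d k)\<close> sets \<open>W\<close> shows that with probability
\<open>1 - 1/n\<close> every pair is joined by a path of length \<open>d + 1\<close> avoiding any small \<open>W\<close>, and then
\<open>k\<close> internally disjoint such paths can be chosen greedily.\<close>

section \<open>Products of Bernoulli variables\<close>

lemma Pi_pmf_eq_bind_Pi_pmf_Diff:
  assumes "finite S" "A \<subseteq> S"
  shows "Pi_pmf S dflt P = bind_pmf (Pi_pmf (S - A) dflt P)
           (\<lambda>g. map_pmf (\<lambda>h x. if x \<in> A then h x else g x) (Pi_pmf A dflt P))"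
proof -
  have "finite A" "S = A \<union> (S - A)" using assms finite_subset by blast+
  hence "Pi_pmf S dflt P = map_pmf (\<lambda>(f,g) x. if x \<in> A then f x else g x)
             (pair_pmf (Pi_pmf A dflt P) (Pi_pmf (S - A) dflt P))"
    using Pi_pmf_union[of A "S - A" dflt P] assms by auto
  also have "\<dots> = bind_pmf (Pi_pmf (S - A) dflt P)
           (\<lambda>g. map_pmf (\<lambda>h x. if x \<in> A then h x else g x) (Pi_pmf A dflt P))"
    by (subst pair_commute_pmf) (simp add: pair_pmf_def map_pmf_def bind_assoc_pmf bind_return_pmf)
  finally show ?thesis .
qed

lemma prob_Pi_pmf_le_if_conditional_le:
  assumes "finite S" "A \<subseteq> S"
    and le: "\<And>g. measure_pmf.prob (Pi_pmf A dflt P) {h. (\<lambda>x. if x \<in> A then h x else g x) \<in> E} \<le> \<delta>"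
  shows "measure_pmf.prob (Pi_pmf S dflt P) E \<le> \<delta>"
proof -
  have "\<delta> \<ge> 0" using le[of undefined] measure_nonneg order_trans by blast
  have "emeasure (measure_pmf (Pi_pmf S dflt P)) E =
     (\<integral>\<^sup>+g. emeasure (map_pmf (\<lambda>h x. if x \<in> A then h x else g x) (Pi_pmf A dflt P)) E \<partial>Pi_pmf (S - A) dflt P)"
    by (subst Pi_pmf_eq_bind_Pi_pmf_Diff[OF assms(1,2)]) simp
  also have "\<dots> \<le> (\<integral>\<^sup>+g. ennreal \<delta> \<partial>Pi_pmf (S - A) dflt P)"
    using le by (intro nn_integral_mono) (simp add: measure_pmf.emeasure_eq_measure vimage_def ennreal_leI)
  also have "\<dots> = ennreal \<delta>" by (simp add: measure_pmf.emeasure_space_1)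
  finally show ?thesis using \<open>\<delta> \<ge> 0\<close> by (simp add: measure_pmf.emeasure_eq_measure)
qed

lemma prob_Pi_pmf_eq_prob_Pi_pmf_subset:
  assumes "finite A" "A' \<subseteq> A"
    and "\<And>h. h \<in> E \<longleftrightarrow> (\<lambda>x. if x \<in> A' then h x else dflt) \<in> E"
  shows "measure_pmf.prob (Pi_pmf A dflt P) E = measure_pmf.prob (Pi_pmf A' dflt P) E"
proof -
  have "measure_pmf.prob (Pi_pmf A' dflt P) E =
    measure_pmf.prob (map_pmf (\<lambda>f x. if x \<in> A' then f x else dflt) (Pi_pmf A dflt P)) E"
    using assms(1,2) by (simp add: Pi_pmf_subset[symmetric])
  also have "\<dots> = measure_pmf.prob (Pi_pmf A dflt P) E"
    using assms(3) by (simp add: vimage_def)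
  finally show ?thesis ..
qed

lemma bool_pmf_eqI:
  fixes M N :: "bool pmf"
  assumes "pmf M False = pmf N False"
  shows "M = N"
proof -
  have "(\<Sum>x\<in>UNIV. pmf M x) = 1" "(\<Sum>x\<in>UNIV. pmf N x) = 1"
    by (rule sum_pmf_eq_1; simp)+
  hence "pmf M True = pmf N True" using assms by (simp add: UNIV_bool)
  thus ?thesis using assms by (intro pmf_eqI) (case_tac i; simp)
qed

lemma map_pmf_disj_pair_bernoulli:
  assumes "0 \<le> p" "p \<le> 1" "0 \<le> q" "q \<le> 1"
  shows "map_pmf (\<lambda>(a,b). a \<or> b) (pair_pmf (bernoulli_pmf p) (bernoulli_pmf q))
         = bernoulli_pmf (1 - (1 - p) * (1 - q))"
proof (rule bool_pmf_eqI)
  have "(\<lambda>(a,b). a \<or> b) -` {False} = {(False, False)}" by auto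
  moreover have "0 \<le> (1 - p) * (1 - q)" "(1 - p) * (1 - q) \<le> 1"
    using assms by (auto intro: mult_le_one)
  ultimately show "pmf (map_pmf (\<lambda>(a,b). a \<or> b) (pair_pmf (bernoulli_pmf p) (bernoulli_pmf q))) False
      = pmf (bernoulli_pmf (1 - (1 - p) * (1 - q))) False"
    using assms by (simp add: pmf_map measure_pmf_single pmf_pair)
qed

lemma map_Pi_pmf_bernoulli_Bex:
  assumes "finite R" "inj_on f R" "0 \<le> p" "p \<le> 1"
  shows "map_pmf (\<lambda>h. \<exists>u\<in>R. h (f u)) (Pi_pmf (f ` R) False (\<lambda>_. bernoulli_pmf p))
         = bernoulli_pmf (1 - (1 - p) ^ card R)"
  using assms(1,2)
proof (induction R rule: finite_induct)
  case empty
  have "bernoulli_pmf 0 = return_pmf False" by (rule bool_pmf_eqI) simp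
  then show ?case by simp
next
  case (insert u R)
  have inj: "inj_on f R" using insert.prems by (auto simp: inj_on_def)
  have new: "f u \<notin> f ` R" using insert by (auto simp: inj_on_def)
  have "map_pmf (\<lambda>h. \<exists>u'\<in>insert u R. h (f u')) (Pi_pmf (f ` insert u R) False (\<lambda>_. bernoulli_pmf p))
      = map_pmf (\<lambda>(a,b). a \<or> b) (map_pmf (\<lambda>(y,g). (y, \<exists>u'\<in>R. g (f u')))
          (pair_pmf (bernoulli_pmf p) (Pi_pmf (f ` R) False (\<lambda>_. bernoulli_pmf p))))"
    using new insert.hyps unfolding map_pmf_comp
    by (simp add: Pi_pmf_insert map_pmf_comp) (intro map_pmf_cong refl; force simp: case_prod_unfold image_iff)
  also have "map_pmf (\<lambda>(y,g). (y, \<exists>u'\<in>R. g (f u')))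
          (pair_pmf (bernoulli_pmf p) (Pi_pmf (f ` R) False (\<lambda>_. bernoulli_pmf p)))
       = pair_pmf (bernoulli_pmf p) (bernoulli_pmf (1 - (1 - p) ^ card R))"
    by (simp add: pair_map_pmf2 apsnd_def map_prod_def case_prod_unfold flip: insert.IH[OF inj])
  also have "map_pmf (\<lambda>(a,b). a \<or> b) \<dots> = bernoulli_pmf (1 - (1 - p) * (1 - (1 - (1 - p) ^ card R)))"
    using assms by (intro map_pmf_disj_pair_bernoulli) (auto intro: power_le_one)
  finally show ?case using insert.hyps by simp
qed

lemma map_Pi_pmf_bernoulli_neighbours:
  assumes "finite R" "finite L" "inj_on (case_prod \<pi>) (R \<times> L)" "0 \<le> p" "p \<le> 1"
  shows "map_pmf (\<lambda>h w. w \<in> L \<and> (\<exists>u\<in>R. h (\<pi> u w))) (Pi_pmf (case_prod \<pi> ` (R \<times> L)) False (\<lambda>_. bernoulli_pmf p))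
         = Pi_pmf L False (\<lambda>_. bernoulli_pmf (1 - (1 - p) ^ card R))"
  using assms(2,3)
proof (induction L rule: finite_induct)
  case empty
  then show ?case by simp
next
  case (insert w L)
  define A where "A = (\<lambda>u. \<pi> u w) ` R"
  define B where "B = case_prod \<pi> ` (R \<times> L)"
  let ?q = "1 - (1 - p) ^ card R"
  have inj: "inj_on (case_prod \<pi>) (R \<times> L)" using insert.prems by (rule inj_on_subset) auto
  have injw: "inj_on (\<lambda>u. \<pi> u w) R" using insert.prems by (auto simp: inj_on_def)
  have disj: "\<pi> u' w' \<noteq> \<pi> u w" if "u \<in> R" "u' \<in> R" "w' \<in> L" for u u' w'
    using that insert.prems insert.hyps unfolding inj_on_def by force
  have eq: "case_prod \<pi> ` (R \<times> insert w L) = A \<union> B" by (auto simp: A_def B_def)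
  have AB: "A \<inter> B = {}" using disj unfolding A_def B_def by fastforce
  have fin: "finite A" "finite B" using assms(1) insert.hyps by (auto simp: A_def B_def)
  have "map_pmf (\<lambda>h w'. w' \<in> insert w L \<and> (\<exists>u\<in>R. h (\<pi> u w'))) (Pi_pmf (A \<union> B) False (\<lambda>_. bernoulli_pmf p))
      = map_pmf (\<lambda>h w'. w' \<in> insert w L \<and> (\<exists>u\<in>R. h (\<pi> u w')))
          (map_pmf (\<lambda>(f,g) x. if x \<in> A then f x else g x)
             (pair_pmf (Pi_pmf A False (\<lambda>_. bernoulli_pmf p)) (Pi_pmf B False (\<lambda>_. bernoulli_pmf p))))"
    using fin AB by (simp add: Pi_pmf_union)
  also have "\<dots> = map_pmf (\<lambda>(a,g). g(w := a)) (map_pmf (\<lambda>(f,g). (\<exists>u\<in>R. f (\<pi> u w), \<lambda>w'. w' \<in> L \<and> (\<exists>u\<in>R. g (\<pi> u w'))))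
             (pair_pmf (Pi_pmf A False (\<lambda>_. bernoulli_pmf p)) (Pi_pmf B False (\<lambda>_. bernoulli_pmf p))))"
    unfolding map_pmf_comp
    by (intro map_pmf_cong refl) (use disj insert.hyps in \<open>auto simp: case_prod_unfold fun_eq_iff A_def\<close>)
  also have "map_pmf (\<lambda>(f,g). (\<exists>u\<in>R. f (\<pi> u w), \<lambda>w'. w' \<in> L \<and> (\<exists>u\<in>R. g (\<pi> u w'))))
             (pair_pmf (Pi_pmf A False (\<lambda>_. bernoulli_pmf p)) (Pi_pmf B False (\<lambda>_. bernoulli_pmf p)))
     = pair_pmf (map_pmf (\<lambda>f. \<exists>u\<in>R. f (\<pi> u w)) (Pi_pmf A False (\<lambda>_. bernoulli_pmf p)))
                (map_pmf (\<lambda>g w'. w' \<in> L \<and> (\<exists>u\<in>R. g (\<pi> u w'))) (Pi_pmf B False (\<lambda>_. bernoulli_pmf p)))"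
    by (simp add: pair_map_pmf1 pair_map_pmf2 map_pmf_comp apsnd_def apfst_def map_prod_def case_prod_unfold)
  also have "map_pmf (\<lambda>f. \<exists>u\<in>R. f (\<pi> u w)) (Pi_pmf A False (\<lambda>_. bernoulli_pmf p)) = bernoulli_pmf ?q"
    unfolding A_def using map_Pi_pmf_bernoulli_Bex[OF assms(1) injw assms(4,5)] by simp
  also have "map_pmf (\<lambda>g w'. w' \<in> L \<and> (\<exists>u\<in>R. g (\<pi> u w'))) (Pi_pmf B False (\<lambda>_. bernoulli_pmf p))
     = Pi_pmf L False (\<lambda>_. bernoulli_pmf ?q)"
    unfolding B_def using insert.IH inj by simp
  also have "map_pmf (\<lambda>(a,g). g(w := a)) (pair_pmf (bernoulli_pmf ?q) (Pi_pmf L False (\<lambda>_. bernoulli_pmf ?q)))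
     = Pi_pmf (insert w L) False (\<lambda>_. bernoulli_pmf ?q)"
    using insert.hyps by (simp add: Pi_pmf_insert)
  finally show ?case using eq by simp
qed

lemma prob_Pi_pmf_bernoulli_all_False:
  assumes "finite L" "0 \<le> q" "q \<le> 1"
  shows "measure_pmf.prob (Pi_pmf L False (\<lambda>_. bernoulli_pmf q)) {f. \<forall>w\<in>L. \<not> f w} = (1 - q) ^ card L"
proof -
  have "{f. \<forall>w\<in>L. \<not> f w} = Pi L (\<lambda>_. {False})" by (auto simp: Pi_def)
  thus ?thesis using assms by (simp add: measure_Pi_pmf_Pi measure_pmf_single)
qed

lemma one_minus_power_le_exp:
  fixes p :: real
  assumes "0 \<le> p" "p \<le> 1"
  shows "(1 - p) ^ k \<le> exp (- p * real k)"
proof -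
  have "(1 - p) ^ k \<le> exp (- p) ^ k"
    by (intro power_mono) (use assms exp_ge_add_one_self[of "-p"] in auto)
  thus ?thesis by (simp add: exp_of_nat_mult[symmetric] mult.commute)
qed

lemma ln_2_le_three_quarters: "ln (2::real) \<le> 3/4"
proof -
  have "(35/32::real)^8 \<le> exp (3/32) ^ 8"
    by (intro power_mono) (use exp_ge_add_one_self[of "3/32::real"] in auto)
  also have "\<dots> = exp (3/4)" by (simp flip: exp_of_nat_mult)
  finally have "2 \<le> exp (3/4::real)" by (rule order_trans[rotated]) (simp add: power_divide divide_simps)
  thus ?thesis by (metis ln_exp ln_le_cancel_iff exp_gt_zero zero_less_numeral)
qed

lemma expectation_Pi_pmf_bernoulli_half_power:
  assumes "finite L" "0 \<le> q" "q \<le> 1"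
  shows "measure_pmf.expectation (Pi_pmf L False (\<lambda>_. bernoulli_pmf q)) (\<lambda>f. (1/2) ^ card {w\<in>L. f w})
           = (1 - q/2) ^ card L"
proof -
  have "(1/2::real) ^ card {w\<in>L. f w} = (\<Prod>w\<in>L. if f w then 1/2 else 1)" for f
    using assms(1) by (simp add: prod.If_cases Int_def)
  hence "measure_pmf.expectation (Pi_pmf L False (\<lambda>_. bernoulli_pmf q)) (\<lambda>f. (1/2) ^ card {w\<in>L. f w})
      = (\<Prod>w\<in>L. measure_pmf.expectation (bernoulli_pmf q) (\<lambda>b. if b then 1/2 else (1::real)))"
    by (simp only:) (intro expectation_prod_Pi_pmf assms(1) integrable_measure_pmf_finite; simp)
  thus ?thesis using assms by simp
qed

text \<open>Markov's inequality for \<open>(1/2)^X\<close>, where \<open>X\<close> is binomial with mean \<open>\<mu> = |L| q\<close>; together with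
\<open>ln 2 \<le> 3/4\<close> this gives the exponent \<open>\<mu>/8\<close>.\<close>

lemma prob_Pi_pmf_bernoulli_lower_tail:
  assumes "finite L" "0 \<le> q" "q \<le> 1"
  shows "measure_pmf.prob (Pi_pmf L False (\<lambda>_. bernoulli_pmf q))
           {f. real (card {w\<in>L. f w}) \<le> real (card L) * q / 2} \<le> exp (- real (card L) * q / 8)"
proof -
  define M where "M = Pi_pmf L False (\<lambda>_. bernoulli_pmf q)"
  define \<mu> where "\<mu> = real (card L) * q"
  define Y where "Y = (\<lambda>f. (1/2::real) ^ card {w\<in>L. f w})"
  define c where "c = exp (- (\<mu> / 2) * ln 2)"
  have "\<mu> \<ge> 0" using assms by (simp add: \<mu>_def)
  have Y_exp: "Y f = exp (- real (card {w\<in>L. f w}) * ln 2)" for f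
    by (simp add: Y_def exp_minus exp_of_nat_mult power_one_over inverse_eq_divide)
  have "{f. real (card {w\<in>L. f w}) \<le> \<mu> / 2} \<subseteq> {f \<in> space M. Y f \<ge> c}"
    by (auto simp: Y_exp c_def)
  hence "measure_pmf.prob M {f. real (card {w\<in>L. f w}) \<le> \<mu> / 2} \<le> measure_pmf.prob M {f \<in> space M. Y f \<ge> c}"
    by (intro measure_pmf.finite_measure_mono) auto
  also have "\<dots> \<le> measure_pmf.expectation M Y / c"
    unfolding M_def Y_def
    by (intro integral_Markov_inequality_measure[where A = UNIV] measure_pmf.integrable_const_bound[where B = 1])
       (auto simp: c_def power_le_one_iff)
  also have "\<dots> = (1 - q/2) ^ card L / c"
    unfolding M_def Y_def by (simp only: expectation_Pi_pmf_bernoulli_half_power[OF assms])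
  also have "\<dots> \<le> exp (- q/2) ^ card L / c"
    using assms by (intro divide_right_mono power_mono) (use exp_ge_add_one_self[of "-q/2"] in \<open>auto simp: c_def\<close>)
  also have "exp (- q/2) ^ card L = exp (- \<mu> / 2)"
    by (simp add: \<mu>_def mult.commute flip: exp_of_nat_mult)
  also have "exp (- \<mu> / 2) / c = exp (- \<mu> / 2 + (\<mu> / 2) * ln 2)"
    by (simp add: c_def exp_minus field_simps flip: exp_add)
  also have "\<dots> \<le> exp (- \<mu> / 8)"
    using mult_left_mono[OF ln_2_le_three_quarters, of "\<mu> / 2"] \<open>\<mu> \<ge> 0\<close> by simp
  finally show ?thesis by (simp add: M_def \<mu>_def)
qed

lemma prob_Pi_pmf_bernoulli_neighbours:
  assumes "finite A" "case_prod \<pi> ` (R \<times> L) \<subseteq> A" "finite R" "finite L"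
    and "inj_on (case_prod \<pi>) (R \<times> L)" "0 \<le> p" "p \<le> 1"
  shows "measure_pmf.prob (Pi_pmf A False (\<lambda>_. bernoulli_pmf p)) {h. P {w \<in> L. \<exists>u\<in>R. h (\<pi> u w)}}
       = measure_pmf.prob (Pi_pmf L False (\<lambda>_. bernoulli_pmf (1 - (1 - p) ^ card R))) {f. P {w \<in> L. f w}}"
proof -
  let ?A' = "case_prod \<pi> ` (R \<times> L)"
  have "measure_pmf.prob (Pi_pmf A False (\<lambda>_. bernoulli_pmf p)) {h. P {w \<in> L. \<exists>u\<in>R. h (\<pi> u w)}}
      = measure_pmf.prob (Pi_pmf ?A' False (\<lambda>_. bernoulli_pmf p)) {h. P {w \<in> L. \<exists>u\<in>R. h (\<pi> u w)}}"
  proof (rule prob_Pi_pmf_eq_prob_Pi_pmf_subset[OF assms(1,2)])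
    fix h :: "'a \<Rightarrow> bool"
    have "{w \<in> L. \<exists>u\<in>R. h (\<pi> u w)} = {w \<in> L. \<exists>u\<in>R. if \<pi> u w \<in> ?A' then h (\<pi> u w) else False}"
      by force
    thus "h \<in> {h. P {w \<in> L. \<exists>u\<in>R. h (\<pi> u w)}} \<longleftrightarrow>
          (\<lambda>x. if x \<in> ?A' then h x else False) \<in> {h. P {w \<in> L. \<exists>u\<in>R. h (\<pi> u w)}}"
      by simp
  qed
  also have "\<dots> = measure_pmf.prob (map_pmf (\<lambda>h w. w \<in> L \<and> (\<exists>u\<in>R. h (\<pi> u w)))
                     (Pi_pmf ?A' False (\<lambda>_. bernoulli_pmf p))) {f. P {w \<in> L. f w}}"
    by (simp add: vimage_def)
  also have "\<dots> = measure_pmf.prob (Pi_pmf L False (\<lambda>_. bernoulli_pmf (1 - (1 - p) ^ card R))) {f. P {w \<in> L. f w}}"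
    by (simp only: map_Pi_pmf_bernoulli_neighbours[OF assms(3-7)])
  finally show ?thesis .
qed

section \<open>Exploring a layered graph\<close>

text \<open>Layers \<open>L 0, L 1, \<dots>\<close> of vertices, where the edge between \<open>u \<in> L j\<close> and \<open>w \<in> L (j+1)\<close> is the
coordinate \<open>\<pi> u w\<close> of the random edge indicator \<open>G\<close>.\<close>

primrec layer_reach :: "(nat \<Rightarrow> 'v set) \<Rightarrow> ('v \<Rightarrow> 'v \<Rightarrow> 'a) \<Rightarrow> ('a \<Rightarrow> bool) \<Rightarrow> nat \<Rightarrow> 'v set" where
  "layer_reach L \<pi> G 0 = L 0"
| "layer_reach L \<pi> G (Suc j) = {w \<in> L (Suc j). \<exists>u\<in>layer_reach L \<pi> G j. G (\<pi> u w)}"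

definition layer_edges :: "(nat \<Rightarrow> 'v set) \<Rightarrow> ('v \<Rightarrow> 'v \<Rightarrow> 'a) \<Rightarrow> nat \<Rightarrow> 'a set" where
  "layer_edges L \<pi> j = case_prod \<pi> ` (L j \<times> L (Suc j))"

lemma layer_reach_subset: "layer_reach L \<pi> G j \<subseteq> L j"
  by (cases j) auto

lemma layer_reach_cong:
  assumes "\<And>i e. i < j \<Longrightarrow> e \<in> layer_edges L \<pi> i \<Longrightarrow> G e = G' e"
  shows "layer_reach L \<pi> G j = layer_reach L \<pi> G' j"
  using assms
proof (induction j)
  case 0 then show ?case by simp
next
  case (Suc j)
  have IH: "layer_reach L \<pi> G j = layer_reach L \<pi> G' j" by (rule Suc.IH) (metis Suc.prems less_SucI)
  have "G (\<pi> u w) = G' (\<pi> u w)" if "u \<in> layer_reach L \<pi> G j" "w \<in> L (Suc j)" for u w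
    using that Suc.prems[of j] layer_reach_subset[of L \<pi> G j] by (force simp: layer_edges_def)
  then show ?case using IH by auto
qed

lemma layer_reach_walk:
  assumes "w \<in> layer_reach L \<pi> G j"
  obtains ps where "length ps = Suc j" "\<forall>i\<le>j. ps ! i \<in> L i" "last ps = w"
    "\<forall>i<j. G (\<pi> (ps ! i) (ps ! Suc i))"
  using assms
proof (induction j arbitrary: w thesis)
  case 0
  then show ?case by (intro "0.prems"(1)[of "[w]"]) auto
next
  case (Suc j)
  then obtain u where u: "u \<in> layer_reach L \<pi> G j" "G (\<pi> u w)" "w \<in> L (Suc j)" by auto
  then obtain ps where ps: "length ps = Suc j" "\<forall>i\<le>j. ps ! i \<in> L i" "last ps = u"
      "\<forall>i<j. G (\<pi> (ps ! i) (ps ! Suc i))" using Suc.IH by blast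
  have "ps ! j = u" using ps(1,3) by (metis diff_Suc_1 last_conv_nth list.size(3) nat.distinct(1))
  show ?case
  proof (rule Suc.prems(1)[of "ps @ [w]"])
    show "\<forall>i\<le>Suc j. (ps @ [w]) ! i \<in> L i"
      using ps u by (auto simp: nth_append le_Suc_eq)
    show "\<forall>i<Suc j. G (\<pi> ((ps @ [w]) ! i) ((ps @ [w]) ! Suc i))"
      using ps u \<open>ps ! j = u\<close> by (auto simp: nth_append less_Suc_eq)
  qed (use ps in auto)
qed

text \<open>The edges between layers \<open>j\<close> and \<open>j + 1\<close> are independent of those that determine the
reached part \<open>R\<close> of layer \<open>j\<close>; conditioned on \<open>R\<close>, the reached part of layer \<open>j + 1\<close> is a binomial
sample with success probability \<open>1 - (1 - p)^|R|\<close>.\<close>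

lemma prob_layer_reach_step_fails_le:
  assumes S: "finite S" "layer_edges L \<pi> j \<subseteq> S"
    and disj: "\<And>i. i < j \<Longrightarrow> layer_edges L \<pi> i \<inter> layer_edges L \<pi> j = {}"
    and fin: "finite (L j)" "finite (L (Suc j))"
    and inj: "inj_on (case_prod \<pi>) (L j \<times> L (Suc j))"
    and p: "0 \<le> p" "p \<le> 1" and "\<delta> \<ge> 0"
    and bound: "\<And>R. R \<subseteq> L j \<Longrightarrow> real (card R) \<ge> s \<Longrightarrow>
        measure_pmf.prob (Pi_pmf (L (Suc j)) False (\<lambda>_. bernoulli_pmf (1 - (1 - p) ^ card R)))
          {f. real (card {w\<in>L (Suc j). f w}) < s'} \<le> \<delta>"
  shows "measure_pmf.prob (Pi_pmf S False (\<lambda>_. bernoulli_pmf p))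
     {G. real (card (layer_reach L \<pi> G j)) \<ge> s \<and> real (card (layer_reach L \<pi> G (Suc j))) < s'} \<le> \<delta>"
proof (rule prob_Pi_pmf_le_if_conditional_le[OF S])
  fix g :: "'a \<Rightarrow> bool"
  define A where "A = layer_edges L \<pi> j"
  define R where "R = layer_reach L \<pi> g j"
  let ?G = "\<lambda>h x. if x \<in> A then h x else g x"
  have RL: "R \<subseteq> L j" unfolding R_def by (rule layer_reach_subset)
  have "finite R" using RL fin finite_subset by blast
  have reach_j: "layer_reach L \<pi> (?G h) j = R" for h
    unfolding R_def by (rule layer_reach_cong) (use disj in \<open>auto simp: A_def\<close>)
  have "\<pi> u w \<in> A" if "u \<in> R" "w \<in> L (Suc j)" for u w
    using that RL by (force simp: A_def layer_edges_def)
  hence reach_Suc: "layer_reach L \<pi> (?G h) (Suc j) = {w \<in> L (Suc j). \<exists>u\<in>R. h (\<pi> u w)}" for h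
    using reach_j[of h] by auto
  show "measure_pmf.prob (Pi_pmf A False (\<lambda>_. bernoulli_pmf p))
     {h. ?G h \<in> {G. real (card (layer_reach L \<pi> G j)) \<ge> s \<and> real (card (layer_reach L \<pi> G (Suc j))) < s'}} \<le> \<delta>"
  proof (cases "real (card R) \<ge> s")
    case False
    then show ?thesis using reach_j \<open>\<delta> \<ge> 0\<close> by simp
  next
    case True
    have "measure_pmf.prob (Pi_pmf A False (\<lambda>_. bernoulli_pmf p))
            {h. real (card {w \<in> L (Suc j). \<exists>u\<in>R. h (\<pi> u w)}) < s'}
        = measure_pmf.prob (Pi_pmf (L (Suc j)) False (\<lambda>_. bernoulli_pmf (1 - (1 - p) ^ card R)))
            {f. real (card {w\<in>L (Suc j). f w}) < s'}"
      using RL fin inj p \<open>finite R\<close>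
      by (intro prob_Pi_pmf_bernoulli_neighbours) (auto simp: A_def layer_edges_def intro: inj_on_subset)
    also have "\<dots> \<le> \<delta>" by (rule bound[OF RL True])
    finally show ?thesis using True by (simp add: reach_j reach_Suc del: layer_reach.simps)
  qed
qed

lemma prob_layer_reach_empty_le:
  assumes "finite S"
    and step: "\<And>j. j < D \<Longrightarrow> measure_pmf.prob (Pi_pmf S False (\<lambda>_. bernoulli_pmf p))
     {G. real (card (layer_reach L \<pi> G j)) \<ge> s j \<and> real (card (layer_reach L \<pi> G (Suc j))) < s (Suc j)} \<le> \<delta> j"
    and "s 0 \<le> real (card (L 0))" and "s D > 0"
  shows "measure_pmf.prob (Pi_pmf S False (\<lambda>_. bernoulli_pmf p)) {G. layer_reach L \<pi> G D = {}} \<le> (\<Sum>j<D. \<delta> j)"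
proof -
  let ?M = "Pi_pmf S False (\<lambda>_. bernoulli_pmf p)"
  let ?E = "\<lambda>j. {G. real (card (layer_reach L \<pi> G j)) \<ge> s j \<and> real (card (layer_reach L \<pi> G (Suc j))) < s (Suc j)}"
  have "{G. layer_reach L \<pi> G D = {}} \<subseteq> (\<Union>j\<in>{..<D}. ?E j)"
  proof (rule subsetI, rule ccontr)
    fix G assume G: "G \<in> {G. layer_reach L \<pi> G D = {}}" and "G \<notin> (\<Union>j\<in>{..<D}. ?E j)"
    hence "j \<le> D \<Longrightarrow> real (card (layer_reach L \<pi> G j)) \<ge> s j" for j
      using assms(3) by (induction j) auto
    from this[of D] G \<open>s D > 0\<close> show False by simp
  qed
  hence "measure_pmf.prob ?M {G. layer_reach L \<pi> G D = {}} \<le> measure_pmf.prob ?M (\<Union>j\<in>{..<D}. ?E j)"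
    by (intro measure_pmf.finite_measure_mono) auto
  also have "\<dots> \<le> (\<Sum>j<D. measure_pmf.prob ?M (?E j))"
    by (intro measure_pmf.finite_measure_subadditive_finite) auto
  also have "\<dots> \<le> (\<Sum>j<D. \<delta> j)" by (intro sum_mono step) auto
  finally show ?thesis .
qed

section \<open>Robust connectivity gives many disjoint paths\<close>

lemma card_subsets_card_le:
  fixes X :: "'a set"
  assumes "finite X"
  shows "card {W. W \<subseteq> X \<and> card W \<le> K} \<le> (card X + 1) ^ K"
proof -
  define F where "F = (\<lambda>f::nat \<Rightarrow> 'a option. {x. \<exists>i<K. f i = Some x})"
  define P where "P = PiE {..<K} (\<lambda>_. insert None (Some ` X))"
  have "{W. W \<subseteq> X \<and> card W \<le> K} \<subseteq> F ` P"
  proof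
    fix W assume W: "W \<in> {W. W \<subseteq> X \<and> card W \<le> K}"
    hence "finite W" using assms finite_subset by blast
    then obtain xs where xs: "set xs = W" "distinct xs" using finite_distinct_list by blast
    have len: "length xs \<le> K" using W xs distinct_card by fastforce
    define f where "f = restrict (\<lambda>i. if i < length xs then Some (xs ! i) else None) {..<K}"
    have "f \<in> P" using W xs nth_mem by (fastforce simp: f_def P_def)
    moreover have "F f = W"
    proof
      show "F f \<subseteq> W" using xs by (auto simp: F_def f_def split: if_splits)
      show "W \<subseteq> F f"
      proof
        fix x assume "x \<in> W"
        then obtain i where "i < length xs" "xs ! i = x" using xs by (metis in_set_conv_nth)
        thus "x \<in> F f" using len by (auto simp: F_def f_def)
      qed
    qed
    ultimately show "W \<in> F ` P" by blast
  qed
  hence "card {W. W \<subseteq> X \<and> card W \<le> K} \<le> card (F ` P)"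
    by (intro card_mono finite_imageI) (use assms in \<open>auto simp: P_def intro!: finite_PiE\<close>)
  also have "\<dots> \<le> card P" by (intro card_image_le) (use assms in \<open>auto simp: P_def intro!: finite_PiE\<close>)
  also have "card P = (card X + 1) ^ K"
    using assms by (simp add: P_def card_PiE card_image)
  finally show ?thesis .
qed

definition bip_vertices :: "nat \<Rightarrow> nat \<Rightarrow> (nat + nat) set" where
  "bip_vertices m n = Inl ` {..<m} \<union> Inr ` {..<n}"

lemma finite_bip_vertices: "finite (bip_vertices m n)"
  by (simp add: bip_vertices_def)

lemma card_bip_vertices_le: "card (bip_vertices m n) \<le> m + n"
  unfolding bip_vertices_def by (rule order_trans[OF card_Un_le]) (simp add: card_image)

lemma bip_adj_in_bip_vertices: "bip_adj m n G u w \<Longrightarrow> u \<in> bip_vertices m n \<and> w \<in> bip_vertices m n"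
  by (cases u; cases w) (auto simp: bip_vertices_def)

lemma is_path_internal_subset:
  assumes "is_path m n G L x y ps"
  shows "internal ps \<subseteq> bip_vertices m n"
proof -
  have len: "length ps = Suc L" and adj: "\<And>i. i < L \<Longrightarrow> bip_adj m n G (ps ! i) (ps ! Suc i)"
    using assms by (simp_all add: is_path_def)
  have "ps ! i \<in> bip_vertices m n" if "0 < L" "i \<le> L" for i
  proof (cases "i < L")
    case True then show ?thesis using bip_adj_in_bip_vertices[OF adj[OF True]] by simp
  next
    case False
    hence "i = Suc (L - 1)" using that by simp
    then show ?thesis using bip_adj_in_bip_vertices[OF adj[of "L - 1"]] that by simp
  qed
  moreover have "internal ps \<subseteq> {ps ! i |i. 0 < i \<and> i < L}"
  proof
    fix v assume "v \<in> internal ps"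
    then obtain k where "k < length (butlast (tl ps))" "butlast (tl ps) ! k = v"
      unfolding internal_def by (metis in_set_conv_nth)
    hence "v = ps ! Suc k" "Suc k < L" using len by (auto simp: nth_butlast nth_tl)
    thus "v \<in> {ps ! i |i. 0 < i \<and> i < L}" by blast
  qed
  ultimately show ?thesis by fastforce
qed

lemma is_path_card_internal:
  assumes "is_path m n G L x y ps"
  shows "card (internal ps) \<le> L - 1" "L \<ge> 2 \<Longrightarrow> internal ps \<noteq> {}"
proof -
  have "length (butlast (tl ps)) = L - 1" using assms by (simp add: is_path_def)
  thus "card (internal ps) \<le> L - 1" unfolding internal_def by (metis card_length)
  show "internal ps \<noteq> {}" if "L \<ge> 2"
  proof -
    have "length (butlast (tl ps)) \<noteq> 0" using \<open>length (butlast (tl ps)) = L - 1\<close> that by linarith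
    thus ?thesis unfolding internal_def by (metis length_0_conv set_empty)
  qed
qed

lemma disjoint_paths_greedy:
  assumes robust: "\<And>W. W \<subseteq> bip_vertices m n \<Longrightarrow> card W \<le> (L - 1) * (N - 1) \<Longrightarrow>
                  \<exists>ps. is_path m n G L x y ps \<and> internal ps \<inter> W = {}"
    and "L \<ge> 2"
  shows "\<exists>P. finite P \<and> card P = N \<and> (\<forall>p\<in>P. is_path m n G L x y p) \<and>
           (\<forall>p\<in>P. \<forall>q\<in>P. p \<noteq> q \<longrightarrow> internal p \<inter> internal q = {})"
proof -
  have "j \<le> N \<Longrightarrow> \<exists>P. finite P \<and> card P = j \<and> (\<forall>p\<in>P. is_path m n G L x y p) \<and>
           (\<forall>p\<in>P. \<forall>q\<in>P. p \<noteq> q \<longrightarrow> internal p \<inter> internal q = {})" for j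
  proof (induction j)
    case 0 then show ?case by (intro exI[of _ "{}"]) auto
  next
    case (Suc j)
    then obtain P where P: "finite P" "card P = j" "\<forall>p\<in>P. is_path m n G L x y p"
      "\<forall>p\<in>P. \<forall>q\<in>P. p \<noteq> q \<longrightarrow> internal p \<inter> internal q = {}" by auto
    define W where "W = \<Union>(internal ` P)"
    have "W \<subseteq> bip_vertices m n" using P(3) is_path_internal_subset unfolding W_def by blast
    moreover have "card W \<le> (L - 1) * (N - 1)"
    proof -
      have "card W \<le> (\<Sum>p\<in>P. card (internal p))" unfolding W_def by (rule card_UN_le[OF P(1)])
      also have "\<dots> \<le> (\<Sum>p\<in>P. L - 1)" using P(3) is_path_card_internal(1) by (intro sum_mono) auto
      also have "\<dots> = (L - 1) * j" using P(2) by simp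
      also have "\<dots> \<le> (L - 1) * (N - 1)" using Suc.prems by (intro mult_le_mono2) simp
      finally show ?thesis .
    qed
    ultimately obtain q where q: "is_path m n G L x y q" "internal q \<inter> W = {}" using robust by blast
    have "q \<notin> P"
    proof
      assume "q \<in> P"
      hence "internal q \<subseteq> W" by (auto simp: W_def)
      thus False using q(2) is_path_card_internal(2)[OF q(1) \<open>L \<ge> 2\<close>] by blast
    qed
    show ?case
    proof (intro exI[of _ "insert q P"] conjI)
      show "finite (insert q P)" "card (insert q P) = Suc j" using P \<open>q \<notin> P\<close> by simp_all
      show "\<forall>p\<in>insert q P. is_path m n G L x y p" using P q by simp
      show "\<forall>p\<in>insert q P. \<forall>q'\<in>insert q P. p \<noteq> q' \<longrightarrow> internal p \<inter> internal q' = {}"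
        using P(4) q(2) unfolding W_def by blast
    qed
  qed
  thus ?thesis by blast
qed

lemma blocking_set_if_not_many_disjoint_paths:
  assumes "\<not> many_disjoint_paths m n G L k x y" "L \<ge> 2"
  obtains W where "W \<subseteq> bip_vertices m n" "card W \<le> (L - 1) * (nat \<lceil>k\<rceil> - 1)"
    "\<not> (\<exists>ps. is_path m n G L x y ps \<and> internal ps \<inter> W = {})"
proof -
  have "\<exists>W. W \<subseteq> bip_vertices m n \<and> card W \<le> (L - 1) * (nat \<lceil>k\<rceil> - 1) \<and>
            \<not> (\<exists>ps. is_path m n G L x y ps \<and> internal ps \<inter> W = {})"
  proof (rule ccontr)
    assume "\<not> ?thesis"
    hence robust: "\<And>W. W \<subseteq> bip_vertices m n \<Longrightarrow> card W \<le> (L - 1) * (nat \<lceil>k\<rceil> - 1) \<Longrightarrow>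
        \<exists>ps. is_path m n G L x y ps \<and> internal ps \<inter> W = {}" by blast
    have "\<exists>P. finite P \<and> card P = nat \<lceil>k\<rceil> \<and> (\<forall>p\<in>P. is_path m n G L x y p) \<and>
             (\<forall>p\<in>P. \<forall>q\<in>P. p \<noteq> q \<longrightarrow> internal p \<inter> internal q = {})"
      by (rule disjoint_paths_greedy) (fact robust, fact assms(2))
    then obtain P where P: "finite P" "card P = nat \<lceil>k\<rceil>" "\<forall>p\<in>P. is_path m n G L x y p"
      "\<forall>p\<in>P. \<forall>q\<in>P. p \<noteq> q \<longrightarrow> internal p \<inter> internal q = {}"
      by (elim exE conjE)
    moreover have "real (card P) \<ge> k" using real_nat_ceiling_ge[of k] P(2) by simp
    ultimately have "many_disjoint_paths m n G L k x y"
      unfolding many_disjoint_paths_def by (intro exI[of _ P]) simp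
    thus False using assms(1) by contradiction
  qed
  thus ?thesis using that by blast
qed

text \<open>As the layers are pairwise disjoint, a walk
through them is a path.\<close>

definition path_layer :: "nat \<Rightarrow> nat \<Rightarrow> nat \<Rightarrow> nat \<Rightarrow> nat \<Rightarrow> (nat + nat) set \<Rightarrow> nat \<Rightarrow> (nat + nat) set" where
  "path_layer m n r x y W j = (if j = 0 then {Inr x} else if j = 2*r+2 then {Inr y} else if j > 2*r+2 then {}
     else if odd j then Inl ` {a. a < m \<and> a mod (r+1) = (j-1) div 2} - W
     else Inr ` {b. b < n \<and> b mod r = (j-2) div 2} - W - {Inr x, Inr y})"

fun path_layer_index :: "nat \<Rightarrow> nat \<Rightarrow> nat \<Rightarrow> nat + nat \<Rightarrow> nat" where
  "path_layer_index r x y (Inl a) = 2 * (a mod (r+1)) + 1"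
| "path_layer_index r x y (Inr b) = (if b = x then 0 else if b = y then 2*r+2 else 2 * (b mod r) + 2)"

text \<open>Junk value \<open>(0, 0)\<close> for two vertices on the same side.\<close>

fun edge_coord :: "nat + nat \<Rightarrow> nat + nat \<Rightarrow> nat \<times> nat" where
  "edge_coord (Inl a) (Inr b) = (a, b)"
| "edge_coord (Inr b) (Inl a) = (a, b)"
| "edge_coord _ _ = (0, 0)"

lemma finite_path_layer: "finite (path_layer m n r x y W j)"
  by (auto simp: path_layer_def)

context
  fixes m n r x y :: nat and W :: "(nat + nat) set"
  assumes xy: "x < n" "y < n" "x \<noteq> y"
begin

lemma path_layer_cases:
  assumes "v \<in> path_layer m n r x y W j"
  shows "(\<exists>a. v = Inl a \<and> a < m \<and> odd j \<and> 1 \<le> j \<and> j \<le> 2*r+1) \<or> (\<exists>b. v = Inr b \<and> b < n \<and> even j \<and> j \<le> 2*r+2)"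
  using assms xy by (auto simp: path_layer_def split: if_splits)

lemma eq_path_layer_index:
  assumes "v \<in> path_layer m n r x y W j"
  shows "j = path_layer_index r x y v"
proof -
  have "odd j \<Longrightarrow> j = 2 * ((j-1) div 2) + 1" "even j \<Longrightarrow> j \<noteq> 0 \<Longrightarrow> j = 2 * ((j-2) div 2) + 2"
    by presburger+
  with assms xy show ?thesis by (cases v) (auto simp: path_layer_def split: if_splits)
qed

lemma path_layer_unique:
  assumes "v \<in> path_layer m n r x y W i" "v \<in> path_layer m n r x y W j"
  shows "i = j"
  using eq_path_layer_index[OF assms(1)] eq_path_layer_index[OF assms(2)] by simp

lemma layer_edges_path_layer_coords:
  assumes "e \<in> layer_edges (path_layer m n r x y W) edge_coord i"
  obtains ka kb where "Inl (fst e) \<in> path_layer m n r x y W ka" "Inr (snd e) \<in> path_layer m n r x y W kb"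
    "ka = i \<and> kb = Suc i \<or> ka = Suc i \<and> kb = i"
proof -
  obtain u w where "u \<in> path_layer m n r x y W i" "w \<in> path_layer m n r x y W (Suc i)" "e = edge_coord u w"
    using assms by (auto simp: layer_edges_def)
  with that show ?thesis using path_layer_cases[of u i] path_layer_cases[of w "Suc i"] by auto
qed

lemma layer_edges_path_layer_disjoint:
  assumes "i < j"
  shows "layer_edges (path_layer m n r x y W) edge_coord i \<inter> layer_edges (path_layer m n r x y W) edge_coord j = {}"
proof (rule ccontr)
  assume "layer_edges (path_layer m n r x y W) edge_coord i \<inter> layer_edges (path_layer m n r x y W) edge_coord j \<noteq> {}"
  then obtain e where e: "e \<in> layer_edges (path_layer m n r x y W) edge_coord i"
    "e \<in> layer_edges (path_layer m n r x y W) edge_coord j" by blast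
  obtain ka kb where k: "Inl (fst e) \<in> path_layer m n r x y W ka" "Inr (snd e) \<in> path_layer m n r x y W kb"
    "ka = i \<and> kb = Suc i \<or> ka = Suc i \<and> kb = i" using e(1) by (rule layer_edges_path_layer_coords)
  obtain ka' kb' where k': "Inl (fst e) \<in> path_layer m n r x y W ka'" "Inr (snd e) \<in> path_layer m n r x y W kb'"
    "ka' = j \<and> kb' = Suc j \<or> ka' = Suc j \<and> kb' = j" using e(2) by (rule layer_edges_path_layer_coords)
  have "ka = ka'" "kb = kb'" using k k' path_layer_unique by blast+
  hence "ka = kb" using k(3) k'(3) assms by auto
  thus False using path_layer_cases[OF k(1)] path_layer_cases[OF k(2)] by auto
qed

lemma inj_on_edge_coord_path_layer:
  "inj_on (case_prod edge_coord) (path_layer m n r x y W i \<times> path_layer m n r x y W (Suc i))"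
proof (rule inj_onI, clarsimp)
  fix u w u' w'
  assume as: "u \<in> path_layer m n r x y W i" "w \<in> path_layer m n r x y W (Suc i)"
    "u' \<in> path_layer m n r x y W i" "w' \<in> path_layer m n r x y W (Suc i)" "edge_coord u w = edge_coord u' w'"
  show "u = u' \<and> w = w'"
    using path_layer_cases[OF as(1)] path_layer_cases[OF as(2)] path_layer_cases[OF as(3)]
      path_layer_cases[OF as(4)] as(5) by auto
qed

lemma layer_edges_path_layer_subset: "layer_edges (path_layer m n r x y W) edge_coord i \<subseteq> {0..<m} \<times> {0..<n}"
proof
  fix e assume "e \<in> layer_edges (path_layer m n r x y W) edge_coord i"
  then obtain u w where "u \<in> path_layer m n r x y W i" "w \<in> path_layer m n r x y W (Suc i)" "e = edge_coord u w"
    by (auto simp: layer_edges_def)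
  thus "e \<in> {0..<m} \<times> {0..<n}" using path_layer_cases[of u i] path_layer_cases[of w "Suc i"] by auto
qed

lemma bip_adj_if_path_layer:
  assumes "u \<in> path_layer m n r x y W i" "w \<in> path_layer m n r x y W (Suc i)" "G (edge_coord u w)"
  shows "bip_adj m n G u w"
  using path_layer_cases[OF assms(1)] path_layer_cases[OF assms(2)] assms(3) by auto

lemma is_path_if_layer_reach:
  assumes "layer_reach (path_layer m n r x y W) edge_coord G (2*r+2) \<noteq> {}"
  shows "\<exists>ps. is_path m n G (2*r+2) (Inr x) (Inr y) ps \<and> internal ps \<inter> W = {}"
proof -
  let ?L = "path_layer m n r x y W"
  obtain w where w: "w \<in> layer_reach ?L edge_coord G (2*r+2)" using assms by blast
  then obtain ps where ps: "length ps = Suc (2*r+2)" "\<forall>i\<le>2*r+2. ps ! i \<in> ?L i" "last ps = w"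
      "\<forall>i<2*r+2. G (edge_coord (ps ! i) (ps ! Suc i))"
    by (rule layer_reach_walk)
  have "w = Inr y" using w layer_reach_subset[of ?L edge_coord G "2*r+2"] by (auto simp: path_layer_def)
  moreover have "hd ps = Inr x"
  proof -
    have "ps \<noteq> []" using ps(1) by auto
    thus ?thesis using ps(2)[rule_format, of 0] by (simp add: hd_conv_nth path_layer_def)
  qed
  moreover have "distinct ps"
    unfolding distinct_conv_nth
  proof (intro allI impI)
    fix i j assume ij: "i < length ps" "j < length ps" "i \<noteq> j"
    have "ps ! i \<in> ?L i" "ps ! j \<in> ?L j" using ps(1,2) ij(1,2) by simp_all
    thus "ps ! i \<noteq> ps ! j" using path_layer_unique ij(3) by metis
  qed
  moreover have "bip_adj m n G (ps ! i) (ps ! Suc i)" if "i < 2*r+2" for i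
    using that ps(2,4) by (intro bip_adj_if_path_layer[of _ i]) auto
  moreover have "internal ps \<inter> W = {}"
  proof -
    have "internal ps \<subseteq> (\<Union>i\<in>{1..2*r+1}. ?L i)"
    proof
      fix v assume "v \<in> internal ps"
      then obtain k where k: "k < length (butlast (tl ps))" "butlast (tl ps) ! k = v"
        unfolding internal_def by (metis in_set_conv_nth)
      hence "v = ps ! Suc k" "Suc k \<in> {1..2*r+1}" using ps(1) by (auto simp: nth_butlast nth_tl)
      moreover have "ps ! Suc k \<in> ?L (Suc k)" using ps(2) \<open>Suc k \<in> {1..2*r+1}\<close> by simp
      ultimately show "v \<in> (\<Union>i\<in>{1..2*r+1}. ?L i)" by blast
    qed
    moreover have "?L i \<inter> W = {}" if "i \<in> {1..2*r+1}" for i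
      using that by (auto simp: path_layer_def)
    ultimately show ?thesis by blast
  qed
  ultimately show ?thesis using ps(1,3) unfolding is_path_def by auto
qed

lemma card_residue_class_ge:
  assumes "c < k"
  shows "card {a. a < N \<and> a mod k = c} \<ge> N div k"
proof -
  have "(\<lambda>i. i * k + c) ` {..<N div k} \<subseteq> {a. a < N \<and> a mod k = c}"
  proof
    fix a assume "a \<in> (\<lambda>i. i * k + c) ` {..<N div k}"
    then obtain i where i: "i < N div k" "a = i * k + c" by auto
    have "(i + 1) * k \<le> N div k * k" using i by (intro mult_right_mono) auto
    also have "\<dots> \<le> N" by (simp add: div_times_less_eq_dividend)
    finally show "a \<in> {a. a < N \<and> a mod k = c}" using i assms by (simp add: algebra_simps)
  qed
  moreover have "inj_on (\<lambda>i. i * k + c) {..<N div k}" using assms by (auto simp: inj_on_def)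
  ultimately have "card ((\<lambda>i. i * k + c) ` {..<N div k}) \<le> card {a. a < N \<and> a mod k = c}"
    by (intro card_mono) auto
  thus ?thesis using \<open>inj_on _ _\<close> by (simp add: card_image)
qed

lemma card_path_layer_odd_ge:
  assumes "odd j" "j \<le> 2*r+1" "finite W"
  shows "real (card (path_layer m n r x y W j)) \<ge> real (m div (r+1)) - real (card W)"
proof -
  let ?A = "Inl ` {a. a < m \<and> a mod (r+1) = (j-1) div 2} :: (nat + nat) set"
  have eq: "path_layer m n r x y W j = ?A - W" using assms by (auto simp: path_layer_def)
  moreover have "card ?A \<ge> m div (r+1)"
    using card_residue_class_ge[of "(j-1) div 2" "r+1" m] assms by (simp add: card_image)
  moreover have "card (?A - W) \<ge> card ?A - card W" using diff_card_le_card_Diff[OF \<open>finite W\<close>] by blast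
  ultimately show ?thesis unfolding eq by linarith
qed

lemma card_path_layer_even_ge:
  assumes "even j" "2 \<le> j" "j \<le> 2*r" "finite W"
  shows "real (card (path_layer m n r x y W j)) \<ge> real (n div r) - real (card W) - 2"
proof -
  let ?A = "Inr ` {b. b < n \<and> b mod r = (j-2) div 2} :: (nat + nat) set"
  have eq: "path_layer m n r x y W j = ?A - (W \<union> {Inr x, Inr y})" using assms by (auto simp: path_layer_def)
  moreover have "card ?A \<ge> n div r"
    using card_residue_class_ge[of "(j-2) div 2" r n] assms by (simp add: card_image)
  moreover have "card (?A - (W \<union> {Inr x, Inr y})) \<ge> card ?A - card (W \<union> {Inr x, Inr y})"
    using diff_card_le_card_Diff[of "W \<union> {Inr x, Inr y}"] \<open>finite W\<close> by blast
  moreover have "card (W \<union> {Inr x, Inr y}) \<le> card W + 2"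
  proof -
    have "card {Inr x, Inr y :: nat + nat} \<le> 2" by (simp add: card_insert_if)
    thus ?thesis using card_Un_le[of W "{Inr x, Inr y}"] by linarith
  qed
  ultimately show ?thesis unfolding eq by linarith
qed

end

text \<open>The target for a layer is half the expected size of its reached part when the previous layer
met its target, except that the last layer \<open>{y}\<close> only has to be hit; \<open>step_failure\<close> bounds the
probability that a step misses its target. \<open>NU\<close> and \<open>NV\<close> are lower bounds for the sizes of the
\<open>U\<close>- and \<open>V\<close>-layers.\<close>

definition layer_size :: "real \<Rightarrow> real \<Rightarrow> nat \<Rightarrow> real" where
  "layer_size NU NV j = (if odd j then NU else NV)"

fun reach_target :: "real \<Rightarrow> real \<Rightarrow> nat \<Rightarrow> real \<Rightarrow> nat \<Rightarrow> real" where
  "reach_target NU NV r p 0 = 1"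
| "reach_target NU NV r p (Suc j) =
     (if Suc j = 2*r+2 then 1 else layer_size NU NV (Suc j) * (1 - exp (- p * reach_target NU NV r p j)) / 2)"

definition step_failure :: "real \<Rightarrow> real \<Rightarrow> nat \<Rightarrow> real \<Rightarrow> nat \<Rightarrow> real" where
  "step_failure NU NV r p j = (if Suc j = 2*r+2 then exp (- p * reach_target NU NV r p j)
     else exp (- reach_target NU NV r p (Suc j) / 4))"

lemma reach_target_nonneg: "0 \<le> NU \<Longrightarrow> 0 \<le> NV \<Longrightarrow> 0 \<le> p \<Longrightarrow> 0 \<le> reach_target NU NV r p j"
  by (induction j) (auto simp: layer_size_def intro!: mult_nonneg_nonneg)

lemma prob_Pi_pmf_bernoulli_neighbours_lower_tail:
  assumes "finite L" "0 \<le> p" "p \<le> 1" "0 \<le> N" "N \<le> real (card L)" "0 \<le> s" "s \<le> real k"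
  shows "measure_pmf.prob (Pi_pmf L False (\<lambda>_. bernoulli_pmf (1 - (1 - p) ^ k)))
           {f. real (card {w \<in> L. f w}) < N * (1 - exp (- p * s)) / 2}
         \<le> exp (- (N * (1 - exp (- p * s)) / 2) / 4)"
proof -
  define q where "q = 1 - (1 - p) ^ k"
  have q01: "0 \<le> q" "q \<le> 1" using assms by (auto simp: q_def intro: power_le_one)
  have "(1 - p) ^ k \<le> exp (- p * real k)" by (rule one_minus_power_le_exp[OF assms(2,3)])
  also have "\<dots> \<le> exp (- p * s)" using mult_left_mono[OF assms(7,2)] by simp
  finally have "(1 - p) ^ k \<le> exp (- p * s)" .
  hence "N * (1 - exp (- p * s)) \<le> real (card L) * q"
    using assms by (intro mult_mono) (auto simp: q_def)
  hence "measure_pmf.prob (Pi_pmf L False (\<lambda>_. bernoulli_pmf q))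
           {f. real (card {w \<in> L. f w}) < N * (1 - exp (- p * s)) / 2}
       \<le> measure_pmf.prob (Pi_pmf L False (\<lambda>_. bernoulli_pmf q))
           {f. real (card {w \<in> L. f w}) \<le> real (card L) * q / 2}"
    by (intro measure_pmf.finite_measure_mono) auto
  also have "\<dots> \<le> exp (- real (card L) * q / 8)"
    by (rule prob_Pi_pmf_bernoulli_lower_tail[OF assms(1) q01])
  also have "\<dots> \<le> exp (- (N * (1 - exp (- p * s)) / 2) / 4)"
    using \<open>N * (1 - exp (- p * s)) \<le> real (card L) * q\<close> by simp
  finally show ?thesis by (simp add: q_def)
qed

lemma prob_Pi_pmf_bernoulli_no_neighbour:
  assumes "0 \<le> p" "p \<le> 1" "s \<le> real k"
  shows "measure_pmf.prob (Pi_pmf {v} False (\<lambda>_. bernoulli_pmf (1 - (1 - p) ^ k)))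
           {f. real (card {w \<in> {v}. f w}) < 1} \<le> exp (- p * s)"
proof -
  have "{f. real (card {w \<in> {v}. f w}) < 1} = {f. \<forall>w\<in>{v}. \<not> f w}" by auto
  moreover have "0 \<le> 1 - (1 - p) ^ k" "1 - (1 - p) ^ k \<le> 1" using assms by (auto intro: power_le_one)
  ultimately have "measure_pmf.prob (Pi_pmf {v} False (\<lambda>_. bernoulli_pmf (1 - (1 - p) ^ k)))
           {f. real (card {w \<in> {v}. f w}) < 1} = (1 - p) ^ k"
    using prob_Pi_pmf_bernoulli_all_False[of "{v}"] by simp
  also have "\<dots> \<le> exp (- p * real k)" by (rule one_minus_power_le_exp[OF assms(1,2)])
  also have "\<dots> \<le> exp (- p * s)" using mult_left_mono[OF assms(3,1)] by simp
  finally show ?thesis .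
qed

lemma layer_size_le_card_path_layer:
  assumes "x < n" "y < n" "x \<noteq> y" "finite W" "1 \<le> j" "j \<le> 2*r+1"
    and "NU \<le> real (m div (r+1)) - real (card W)" "NV \<le> real (n div r) - real (card W) - 2"
  shows "layer_size NU NV j \<le> real (card (path_layer m n r x y W j))"
proof (cases "odd j")
  case True
  then show ?thesis using card_path_layer_odd_ge[OF assms(1-3) True assms(6,4), of m] assms(7)
    by (simp add: layer_size_def)
next
  case False
  hence "2 \<le> j" "j \<le> 2*r" using assms(5,6) by presburger+
  then show ?thesis using card_path_layer_even_ge[where m = m and r = r and j = j, OF assms(1-3) _ _ _ assms(4)] False assms(8)
    by (simp add: layer_size_def)
qed

lemma prob_no_path_avoiding_le:
  assumes xy: "x < n" "y < n" "x \<noteq> y" and "finite W"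
    and p: "0 \<le> p" "p \<le> 1"
    and NU: "0 \<le> NU" "NU \<le> real (m div (r+1)) - real (card W)"
    and NV: "0 \<le> NV" "NV \<le> real (n div r) - real (card W) - 2"
  shows "measure_pmf.prob (random_bip m n p)
     {G. \<not> (\<exists>ps. is_path m n G (2*r+2) (Inr x) (Inr y) ps \<and> internal ps \<inter> W = {})}
     \<le> (\<Sum>j<2*r+2. step_failure NU NV r p j)"
proof -
  let ?L = "path_layer m n r x y W"
  let ?M = "Pi_pmf ({0..<m} \<times> {0..<n}) False (\<lambda>_. bernoulli_pmf p)"
  let ?s = "reach_target NU NV r p"
  have "measure_pmf.prob ?M {G. \<not> (\<exists>ps. is_path m n G (2*r+2) (Inr x) (Inr y) ps \<and> internal ps \<inter> W = {})}
     \<le> measure_pmf.prob ?M {G. layer_reach ?L edge_coord G (2*r+2) = {}}"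
    using is_path_if_layer_reach[where r = r and W = W and m = m, OF xy]
    by (intro measure_pmf.finite_measure_mono) (auto simp del: layer_reach.simps)
  also have "\<dots> \<le> (\<Sum>j<2*r+2. step_failure NU NV r p j)"
  proof (rule prob_layer_reach_empty_le)
    fix j assume j: "j < 2*r+2"
    show "measure_pmf.prob ?M {G. ?s j \<le> real (card (layer_reach ?L edge_coord G j)) \<and>
             real (card (layer_reach ?L edge_coord G (Suc j))) < ?s (Suc j)} \<le> step_failure NU NV r p j"
    proof (rule prob_layer_reach_step_fails_le)
      fix R assume R: "R \<subseteq> ?L j" "?s j \<le> real (card R)"
      show "measure_pmf.prob (Pi_pmf (?L (Suc j)) False (\<lambda>_. bernoulli_pmf (1 - (1 - p) ^ card R)))
          {f. real (card {w \<in> ?L (Suc j). f w}) < ?s (Suc j)} \<le> step_failure NU NV r p j"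
      proof (cases "Suc j = 2*r+2")
        case True
        hence "?L (Suc j) = {Inr y}" by (simp add: path_layer_def)
        then show ?thesis using True prob_Pi_pmf_bernoulli_no_neighbour[OF p R(2)]
          by (simp add: step_failure_def)
      next
        case False
        have "layer_size NU NV (Suc j) \<le> real (card (?L (Suc j)))"
          using False j by (intro layer_size_le_card_path_layer[OF xy \<open>finite W\<close> _ _ NU(2) NV(2)]) auto
        with False show ?thesis
          using prob_Pi_pmf_bernoulli_neighbours_lower_tail[OF finite_path_layer p _ _ reach_target_nonneg R(2)]
            NU(1) NV(1) p by (simp add: step_failure_def layer_size_def)
      qed
    qed (use p in \<open>simp_all add: step_failure_def finite_path_layer layer_edges_path_layer_subset[OF xy]
                       layer_edges_path_layer_disjoint[OF xy] inj_on_edge_coord_path_layer[OF xy]\<close>)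
  qed (simp_all add: path_layer_def)
  finally show ?thesis by (simp add: random_bip_def)
qed

lemma card_bip_vertex_subsets_le:
  "real (card {W. W \<subseteq> bip_vertices m n \<and> card W \<le> K}) \<le> (real (m + n) + 1) ^ K"
proof -
  have "card {W. W \<subseteq> bip_vertices m n \<and> card W \<le> K} \<le> (card (bip_vertices m n) + 1) ^ K"
    by (rule card_subsets_card_le[OF finite_bip_vertices])
  also have "\<dots> \<le> (m + n + 1) ^ K" using card_bip_vertices_le by (intro power_mono) auto
  finally have "real (card {W. W \<subseteq> bip_vertices m n \<and> card W \<le> K}) \<le> real ((m + n + 1) ^ K)"
    by (simp only: of_nat_le_iff)
  thus ?thesis by (simp add: add.commute)
qed

lemma not_all_many_paths_subset_blocked:
  assumes "L \<ge> 2"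
  shows "{G. \<not> (\<forall>x<n. \<forall>y<n. x \<noteq> y \<longrightarrow> many_disjoint_paths m n G L k (Inr x) (Inr y))}
    \<subseteq> (\<Union>(x, y, W)\<in>{..<n} \<times> {..<n} \<times> {W. W \<subseteq> bip_vertices m n \<and> card W \<le> (L - 1) * (nat \<lceil>k\<rceil> - 1)}.
          {G. x \<noteq> y \<and> \<not> (\<exists>ps. is_path m n G L (Inr x) (Inr y) ps \<and> internal ps \<inter> W = {})})"
proof
  fix G assume "G \<in> {G. \<not> (\<forall>x<n. \<forall>y<n. x \<noteq> y \<longrightarrow> many_disjoint_paths m n G L k (Inr x) (Inr y))}"
  then obtain x y where xy: "x < n" "y < n" "x \<noteq> y" "\<not> many_disjoint_paths m n G L k (Inr x) (Inr y)"
    by blast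
  obtain W where "W \<subseteq> bip_vertices m n" "card W \<le> (L - 1) * (nat \<lceil>k\<rceil> - 1)"
      "\<not> (\<exists>ps. is_path m n G L (Inr x) (Inr y) ps \<and> internal ps \<inter> W = {})"
    using xy(4) assms by (rule blocking_set_if_not_many_disjoint_paths)
  with xy show "G \<in> (\<Union>(x, y, W)\<in>{..<n} \<times> {..<n} \<times> {W. W \<subseteq> bip_vertices m n \<and> card W \<le> (L - 1) * (nat \<lceil>k\<rceil> - 1)}.
          {G. x \<noteq> y \<and> \<not> (\<exists>ps. is_path m n G L (Inr x) (Inr y) ps \<and> internal ps \<inter> W = {})})"
    by blast
qed

lemma prob_not_all_many_paths_le:
  fixes k :: real and r m n :: nat
  defines "K \<equiv> (2*r+1) * (nat \<lceil>k\<rceil> - 1)"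
  assumes p: "0 \<le> p" "p \<le> 1"
    and NU: "0 \<le> NU" "NU \<le> real (m div (r+1)) - real K"
    and NV: "0 \<le> NV" "NV \<le> real (n div r) - real K - 2"
  shows "measure_pmf.prob (random_bip m n p)
     {G. \<not> (\<forall>x<n. \<forall>y<n. x \<noteq> y \<longrightarrow> many_disjoint_paths m n G (2*r+2) k (Inr x) (Inr y))}
     \<le> real n * real n * (real (m + n) + 1) ^ K * (\<Sum>j<2*r+2. step_failure NU NV r p j)"
proof -
  define Ws where "Ws = {W. W \<subseteq> bip_vertices m n \<and> card W \<le> K}"
  define B where "B = (\<lambda>(x,y,W). {G. x \<noteq> y \<and> \<not> (\<exists>ps. is_path m n G (2*r+2) (Inr x) (Inr y) ps \<and> internal ps \<inter> W = {})})"
  define \<delta> where "\<delta> = (\<Sum>j<2*r+2. step_failure NU NV r p j)"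
  have "\<delta> \<ge> 0" unfolding \<delta>_def step_failure_def by (intro sum_nonneg) auto
  have "finite Ws" unfolding Ws_def by (rule finite_subset[of _ "Pow (bip_vertices m n)"]) (auto simp: finite_bip_vertices)
  have "measure_pmf.prob (random_bip m n p)
     {G. \<not> (\<forall>x<n. \<forall>y<n. x \<noteq> y \<longrightarrow> many_disjoint_paths m n G (2*r+2) k (Inr x) (Inr y))}
     \<le> measure_pmf.prob (random_bip m n p) (\<Union>i\<in>{..<n} \<times> {..<n} \<times> Ws. B i)"
    using not_all_many_paths_subset_blocked[of "2*r+2" n m k] unfolding B_def Ws_def K_def
    by (intro measure_pmf.finite_measure_mono) auto
  also have "\<dots> \<le> (\<Sum>i\<in>{..<n} \<times> {..<n} \<times> Ws. measure_pmf.prob (random_bip m n p) (B i))"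
    using \<open>finite Ws\<close> by (intro measure_pmf.finite_measure_subadditive_finite) auto
  also have "\<dots> \<le> (\<Sum>i\<in>{..<n} \<times> {..<n} \<times> Ws. \<delta>)"
  proof (intro sum_mono, clarify)
    fix x y W assume "x < n" "y < n" "W \<in> Ws"
    hence "finite W" "card W \<le> K" using finite_bip_vertices finite_subset by (auto simp: Ws_def)
    show "measure_pmf.prob (random_bip m n p) (B (x, y, W)) \<le> \<delta>"
    proof (cases "x = y")
      case False
      hence "B (x, y, W) = {G. \<not> (\<exists>ps. is_path m n G (2*r+2) (Inr x) (Inr y) ps \<and> internal ps \<inter> W = {})}"
        by (simp add: B_def)
      also have "measure_pmf.prob (random_bip m n p) \<dots> \<le> \<delta>"
        unfolding \<delta>_def using \<open>card W \<le> K\<close> NU(2) NV(2)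
        by (intro prob_no_path_avoiding_le[OF \<open>x < n\<close> \<open>y < n\<close> False \<open>finite W\<close> p NU(1) _ NV(1)]) auto
      finally show ?thesis .
    qed (use \<open>\<delta> \<ge> 0\<close> in \<open>simp add: B_def\<close>)
  qed
  also have "\<dots> = real n * real n * real (card Ws) * \<delta>" by (simp add: card_cartesian_product)
  also have "\<dots> \<le> real n * real n * (real (m + n) + 1) ^ K * \<delta>"
    using card_bip_vertex_subsets_le \<open>\<delta> \<ge> 0\<close> unfolding Ws_def by (intro mult_right_mono mult_left_mono) auto
  finally show ?thesis by (simp add: \<delta>_def)
qed

section \<open>Growth of the targets\<close>

lemma min_half_le_one_minus_exp:
  assumes "0 \<le> (z::real)"
  shows "min z 1 / 2 \<le> 1 - exp (- z)"
proof -
  have "exp (- z) \<le> 1 / (1 + z)" using assms exp_ge_add_one_self[of z] by (simp add: exp_minus field_simps)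
  hence "1 - exp (- z) \<ge> z / (1 + z)" using assms by (simp add: field_simps)
  moreover have "z / (1 + z) \<ge> min z 1 / 2"
  proof (cases "z \<le> 1")
    case True
    hence "z * z \<le> z * 1" using assms by (intro mult_left_mono) auto
    thus ?thesis using True assms by (auto simp: min_def field_simps)
  qed (use assms in \<open>auto simp: min_def field_simps\<close>)
  ultimately show ?thesis by linarith
qed

text \<open>As long as \<open>p s\<^sub>j \<le> 1\<close>, \<open>1 - exp (-p s\<^sub>j) \<ge> p s\<^sub>j / 2\<close>, so the targets grow by the factor \<open>N p / 4\<close>
per layer; once they reach a constant fraction \<open>N / 4\<close> of the layers they stay there.\<close>

lemma reach_target_ge:
  assumes p: "0 \<le> p" "p \<le> 1" and N: "0 \<le> NU" "0 \<le> NV" "NU * p / 4 \<ge> 1" "NV * p / 4 \<ge> 1"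
  shows "j \<le> 2*r+1 \<Longrightarrow>
    reach_target NU NV r p j \<ge> min (\<Prod>i\<in>{1..j}. layer_size NU NV i * p / 4) (min NU NV / 4)"
proof (induction j)
  case 0
  then show ?case by simp
next
  case (Suc j)
  let ?s = "reach_target NU NV r p j"
  let ?N = "layer_size NU NV (Suc j)"
  let ?a = "?N * p / 4"
  let ?P = "\<Prod>i\<in>{1..j}. layer_size NU NV i * p / 4"
  let ?M = "min NU NV / 4"
  have IH: "?s \<ge> min ?P ?M" using Suc by simp
  have "?s \<ge> 0" using reach_target_nonneg N p by blast
  have "?a \<ge> 1" "?N \<ge> 0" "?N / 4 \<ge> ?M" using N by (auto simp: layer_size_def)
  have "?N * (min (p * ?s) 1 / 2) \<le> ?N * (1 - exp (- p * ?s))"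
    using min_half_le_one_minus_exp[of "p * ?s"] p \<open>?s \<ge> 0\<close> \<open>?N \<ge> 0\<close> by (intro mult_left_mono) auto
  hence ge: "reach_target NU NV r p (Suc j) \<ge> ?N * min (p * ?s) 1 / 4" using Suc.prems by simp
  have "?P \<ge> 1" by (rule prod_ge_1) (use N in \<open>auto simp: layer_size_def\<close>)
  have "min (?a * ?P) ?M \<le> ?N * min (p * ?s) 1 / 4"
  proof (cases "p * ?s \<le> 1")
    case True
    have "?a * ?s \<ge> min (?a * ?P) ?M"
    proof (cases "?P \<le> ?M")
      case True
      then show ?thesis using IH \<open>?a \<ge> 1\<close> mult_left_mono[of ?P ?s ?a] by simp
    next
      case False
      hence "?s \<ge> ?M" using IH by linarith
      hence "?a * ?s \<ge> 1 * ?M" using \<open>?a \<ge> 1\<close> N by (intro mult_mono) auto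
      thus ?thesis by linarith
    qed
    thus ?thesis using True by (simp add: min_def)
  next
    case False
    thus ?thesis using \<open>?N / 4 \<ge> ?M\<close> by (simp add: min_def)
  qed
  moreover have "(\<Prod>i\<in>{1..Suc j}. layer_size NU NV i * p / 4) = ?a * ?P"
    by (simp add: prod.nat_ivl_Suc')
  ultimately show ?case using ge by linarith
qed

lemma prod_alternating:
  "(\<Prod>i\<in>{1..2*r+1}. if odd i then (a::real) else b) = a ^ (r+1) * b ^ r"
proof (induction r)
  case 0 then show ?case by simp
next
  case (Suc r)
  have "{1..2 * Suc r + 1} = insert (2*r+3) (insert (2*r+2) {1..2*r+1})" by auto
  hence "(\<Prod>i\<in>{1..2 * Suc r + 1}. if odd i then a else b) =
     (if odd (2*r+3) then a else b) * ((if odd (2*r+2) then a else b) * (\<Prod>i\<in>{1..2*r+1}. if odd i then a else b))"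
    by simp
  also have "\<dots> = a * (b * (a ^ (r+1) * b ^ r))" using Suc by simp
  finally show ?case by (simp add: algebra_simps)
qed

lemma step_failure_last_le:
  assumes p: "0 \<le> p" "p \<le> 1" and N: "0 \<le> NU" "0 \<le> NV" "NU * p / 4 \<ge> 1" "NV * p / 4 \<ge> 1"
    and \<Phi>: "\<Phi> \<le> min (NU * p / 4) (NV * p / 4)" "\<Phi> \<le> p * (NU * p / 4) ^ (r+1) * (NV * p / 4) ^ r"
  shows "step_failure NU NV r p (2*r+1) \<le> exp (- \<Phi>)"
proof -
  have "(\<Prod>i\<in>{1..2*r+1}. layer_size NU NV i * p / 4) = (\<Prod>i\<in>{1..2*r+1}. if odd i then NU * p / 4 else NV * p / 4)"
    by (intro prod.cong) (auto simp: layer_size_def)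
  also have "\<dots> = (NU * p / 4) ^ (r+1) * (NV * p / 4) ^ r" by (rule prod_alternating)
  finally have P: "(\<Prod>i\<in>{1..2*r+1}. layer_size NU NV i * p / 4) = (NU * p / 4) ^ (r+1) * (NV * p / 4) ^ r" .
  have "reach_target NU NV r p (2*r+1) \<ge> min ((NU * p / 4) ^ (r+1) * (NV * p / 4) ^ r) (min NU NV / 4)"
    using reach_target_ge[OF p N, of "2*r+1" r] unfolding P by simp
  hence "p * reach_target NU NV r p (2*r+1) \<ge> p * min ((NU * p / 4) ^ (r+1) * (NV * p / 4) ^ r) (min NU NV / 4)"
    using p(1) by (rule mult_left_mono)
  moreover have "p * min ((NU * p / 4) ^ (r+1) * (NV * p / 4) ^ r) (min NU NV / 4)
      = min (p * (NU * p / 4) ^ (r+1) * (NV * p / 4) ^ r) (min (NU * p / 4) (NV * p / 4))"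
    using p by (simp add: min_mult_distrib_left mult_ac)
  ultimately have "p * reach_target NU NV r p (2*r+1) \<ge> \<Phi>" using \<Phi> by linarith
  thus ?thesis by (simp add: step_failure_def)
qed

lemma step_failure_le:
  assumes p: "0 \<le> p" "p \<le> 1" and N: "0 \<le> NU" "0 \<le> NV" "NU * p / 4 \<ge> 1" "NV * p / 4 \<ge> 1"
    and \<Phi>: "\<Phi> \<le> min (NU * p / 4) (NV * p / 4) / 4" and j: "Suc j \<le> 2*r+1"
  shows "step_failure NU NV r p j \<le> exp (- \<Phi>)"
proof -
  let ?a = "\<lambda>i. layer_size NU NV i * p / 4"
  have "(\<Prod>i\<in>{1..j}. ?a i) \<ge> 1" by (rule prod_ge_1) (use N in \<open>auto simp: layer_size_def\<close>)
  moreover have "?a (Suc j) \<ge> 1" using N by (simp add: layer_size_def)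
  ultimately have "?a (Suc j) * 1 \<le> ?a (Suc j) * (\<Prod>i\<in>{1..j}. ?a i)"
    using \<open>?a (Suc j) \<ge> 1\<close> by (intro mult_left_mono) auto
  moreover have "(\<Prod>i\<in>{1..Suc j}. ?a i) = ?a (Suc j) * (\<Prod>i\<in>{1..j}. ?a i)"
    by (simp add: prod.nat_ivl_Suc')
  ultimately have "(\<Prod>i\<in>{1..Suc j}. ?a i) \<ge> ?a (Suc j)" by (simp only: mult_1_right)
  moreover have "?a (Suc j) \<ge> min (NU * p / 4) (NV * p / 4)" by (simp only: layer_size_def split: if_split) (simp only: min.cobounded1 min.cobounded2 simp_thms)
  moreover have "min (NU * p / 4) (NV * p / 4) = min NU NV * p / 4"
    using p by (simp add: min_mult_distrib_right)
  hence "min NU NV / 4 \<ge> min (NU * p / 4) (NV * p / 4)"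
    using p N mult_left_le[of p "min NU NV"] by simp
  ultimately have "reach_target NU NV r p (Suc j) \<ge> min (NU * p / 4) (NV * p / 4)"
    using reach_target_ge[OF p N j] by linarith
  hence "\<Phi> \<le> reach_target NU NV r p (Suc j) / 4" using \<Phi> by linarith
  thus ?thesis using j by (simp add: step_failure_def del: reach_target.simps)
qed

lemma sum_step_failure_le:
  assumes "0 \<le> p" "p \<le> 1" "0 \<le> NU" "0 \<le> NV" "NU * p / 4 \<ge> 1" "NV * p / 4 \<ge> 1"
    and "0 \<le> \<Phi>" "\<Phi> \<le> min (NU * p / 4) (NV * p / 4) / 4"
      "\<Phi> \<le> p * (NU * p / 4) ^ (r+1) * (NV * p / 4) ^ r"
  shows "(\<Sum>j<2*r+2. step_failure NU NV r p j) \<le> real (2*r+2) * exp (- \<Phi>)"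
proof -
  have "step_failure NU NV r p j \<le> exp (- \<Phi>)" if "j < 2*r+2" for j
  proof (cases "j = 2*r+1")
    case True
    then show ?thesis using step_failure_last_le[OF assms(1-6), of \<Phi> r] assms(7-9) by simp
  qed (use that step_failure_le[OF assms(1-6,8)] in auto)
  hence "(\<Sum>j<2*r+2. step_failure NU NV r p j) \<le> (\<Sum>j<2*r+2. exp (- \<Phi>))" by (intro sum_mono) auto
  thus ?thesis by simp
qed

section \<open>Choice of the parameters\<close>

lemma ln_union_bound_factor_le:
  fixes n m r K :: nat and A t :: real
  assumes "n \<ge> 1" "m \<le> n" "t \<ge> 1" "ln (real n) \<le> t" "real K \<le> A * t" "A \<ge> 0"
  shows "ln (real n ^ 3 * (real (m + n) + 1) ^ K * real (2*r+2)) \<le> (5 + 3 * A + 2 * real r) * t^2"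
proof -
  have "ln (real (m + n) + 1) \<le> ln (3 * real n)" using assms(1,2) by (intro ln_mono) auto
  also have "\<dots> = ln 3 + ln (real n)" using assms(1) by (simp add: ln_mult)
  also have "\<dots> \<le> 2 + t" using ln_le_minus_one[of 3] assms(4) by simp
  finally have "real K * ln (real (m + n) + 1) \<le> A * t * (2 + t)"
    using assms(5) \<open>t \<ge> 1\<close> by (intro mult_mono) auto
  have "t \<le> t^2" using \<open>t \<ge> 1\<close> by (simp add: power2_eq_square)
  have "1 \<le> t^2" using \<open>t \<ge> 1\<close> by (rule one_le_power)
  have "A * t \<le> A * t^2" "(2 * real r + 2) * 1 \<le> (2 * real r + 2) * t^2"
    using \<open>t \<le> t^2\<close> \<open>1 \<le> t^2\<close> \<open>A \<ge> 0\<close> by (intro mult_left_mono; simp)+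
  have "ln (real n ^ 3 * (real (m + n) + 1) ^ K * real (2*r+2))
      = 3 * ln (real n) + real K * ln (real (m + n) + 1) + ln (real (2*r+2))"
    using assms(1) by (simp add: ln_mult ln_realpow)
  also have "\<dots> \<le> 3 * t^2 + 3 * (A * t^2) + (2 * real r + 2) * t^2"
    using \<open>real K * ln (real (m + n) + 1) \<le> A * t * (2 + t)\<close> ln_le_minus_one[of "real (2*r+2)"] assms(4)
      \<open>t \<le> t^2\<close> \<open>A * t \<le> A * t^2\<close> \<open>(2 * real r + 2) * 1 \<le> (2 * real r + 2) * t^2\<close>
    by (simp add: algebra_simps power2_eq_square)
  also have "\<dots> = (5 + 3 * A + 2 * real r) * t^2" by (simp add: algebra_simps)
  finally show ?thesis .
qed

lemma union_bound_le_inverse: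
  fixes n m r K :: nat and A t \<Phi> :: real
  assumes "n \<ge> 1" "m \<le> n" "t \<ge> 1" "ln (real n) \<le> t" "real K \<le> A * t" "A \<ge> 0"
    and "(5 + 3 * A + 2 * real r) * t^2 \<le> \<Phi>"
  shows "real n * real n * (real (m + n) + 1) ^ K * (real (2*r+2) * exp (- \<Phi>)) \<le> 1 / real n"
proof -
  define X where "X = real n ^ 3 * (real (m + n) + 1) ^ K * real (2*r+2)"
  have "X > 0" using assms(1) by (simp add: X_def)
  have "ln X \<le> \<Phi>" using ln_union_bound_factor_le[OF assms(1-6), of r] assms(7) unfolding X_def by linarith
  hence "X \<le> exp \<Phi>" using \<open>X > 0\<close> by (metis exp_ln exp_le_cancel_iff)
  hence "X * exp (- \<Phi>) \<le> 1" by (simp add: exp_minus field_simps)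
  moreover have "real n * real n * (real (m + n) + 1) ^ K * (real (2*r+2) * exp (- \<Phi>)) = X * exp (- \<Phi>) / real n"
    using assms(1) by (simp add: X_def field_simps power3_eq_cube)
  ultimately show ?thesis using assms(1) by (simp add: divide_right_mono)
qed

lemma half_quotient_le_div_minus:
  assumes "0 < b" "K + 3 \<le> real a / (2 * real b)"
  shows "real a / (2 * real b) \<le> real (a div b) - K - 2"
proof -
  have "real a = real (a div b) * real b + real (a mod b)" by (metis of_nat_add of_nat_mult div_mult_mod_eq)
  moreover have "real (a mod b) < real b" using assms(1) by simp
  ultimately have "real a / real b - 1 \<le> real (a div b)" using assms(1) by (simp add: field_simps)
  moreover have "real a / real b = 2 * (real a / (2 * real b))" by simp
  ultimately show ?thesis using assms(2) by linarith
qed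

lemma layer_sizes_le:
  fixes m n r K :: nat and t :: real
  assumes "r \<ge> 1" "t^4 \<le> real m" "m \<le> n" "2 * real (r+1) * (3 + real K) \<le> t^4"
  shows "real m / (2 * real (r+1)) \<le> real (m div (r+1)) - real K"
    and "real n / (2 * real r) \<le> real (n div r) - real K - 2"
proof -
  have "real K + 3 \<le> t^4 / (2 * real (r+1))" using assms(4) by (simp add: field_simps)
  also have "\<dots> \<le> real m / (2 * real (r+1))" using assms(2) by (intro divide_right_mono) auto
  finally have U: "real K + 3 \<le> real m / (2 * real (r+1))" .
  thus "real m / (2 * real (r+1)) \<le> real (m div (r+1)) - real K"
    using half_quotient_le_div_minus[of "r+1" "real K" m] by simp
  have "real m / (2 * real (r+1)) \<le> real n / (2 * real r)"
    using assms(1,3) by (intro frac_le) auto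
  thus "real n / (2 * real r) \<le> real (n div r) - real K - 2"
    using U half_quotient_le_div_minus[of r "real K" n] assms(1) by simp
qed

lemma layer_targets_ge:
  fixes r :: nat and C1 P1 t m n :: real
  defines "NU \<equiv> m / (2 * real (r+1))" and "NV \<equiv> n / (2 * real r)" and "p \<equiv> C1 * P1"
  assumes "r \<ge> 1" "C1 \<ge> 1" "P1 \<ge> 0" "0 \<le> m" "m \<le> n" "P1 * m \<ge> t^4" "12 * real (r+1) \<le> t^4"
  shows "NU * p / 4 \<ge> 1" "NV * p / 4 \<ge> NU * p / 4" "t^4 / (32 * real (r+1)) \<le> NU * p / 4 / 4"
proof -
  have "p \<ge> 0" using assms by (simp add: p_def)
  have NUp: "NU * p / 4 = C1 * (P1 * m) / (8 * real (r+1))" by (simp add: NU_def p_def field_simps)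
  have "t^4 \<le> C1 * (P1 * m)" using assms(5,9) mult_mono[of 1 C1 "t^4" "P1 * m"] by simp
  hence ge: "t^4 / (8 * real (r+1)) \<le> NU * p / 4" unfolding NUp by (intro divide_right_mono) auto
  moreover have "12 * real (r+1) / (8 * real (r+1)) \<le> t^4 / (8 * real (r+1))"
    using assms(10) by (intro divide_right_mono) auto
  moreover have "12 * real (r+1) / (8 * real (r+1)) = 3/2" by (simp add: field_simps)
  ultimately show "NU * p / 4 \<ge> 1" by linarith
  have "m * p \<le> n * p" using assms(8) \<open>p \<ge> 0\<close> by (intro mult_right_mono)
  hence "m * p / (8 * real (r+1)) \<le> n * p / (8 * real r)"
    using assms(4,7,8) \<open>p \<ge> 0\<close> by (intro frac_le) auto
  thus "NV * p / 4 \<ge> NU * p / 4" unfolding NU_def NV_def by (simp add: field_simps)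
  have "t^4 / (32 * real (r+1)) = t^4 / (8 * real (r+1)) / 4" by simp
  also have "\<dots> \<le> NU * p / 4 / 4" using ge by (rule divide_right_mono) simp
  finally show "t^4 / (32 * real (r+1)) \<le> NU * p / 4 / 4" .
qed

lemma layer_target_product_ge:
  fixes r :: nat and C1 P1 t m n :: real
  defines "d \<equiv> 2*r+1" and "p \<equiv> C1 * P1"
  assumes "r \<ge> 1" "C1 \<ge> 1" "P1 \<ge> 0" "0 \<le> m" "m \<le> n" "P1 * m \<ge> t^4" "P1 ^ d * (m * n) ^ r \<ge> 1"
  shows "t^4 / (32 * real (r+1)) ^ d \<le> p * (m / (2 * real (r+1)) * p / 4) ^ (r+1) * (n / (2 * real r) * p / 4) ^ r"
proof -
  define c where "c = 8 * real (r+1)"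
  have "p \<ge> 0" "c > 0" using assms by (simp_all add: p_def c_def)
  have "t^4 / (32 * real (r+1)) ^ d \<le> t^4 / c ^ d"
    using \<open>c > 0\<close> assms(8) by (intro divide_left_mono power_mono) (auto simp: c_def)
  also have "\<dots> \<le> C1 ^ (d+1) * (P1 * m) * (P1 ^ d * (m * n) ^ r) / c ^ d"
  proof -
    have "1 * t^4 * 1 \<le> C1 ^ (d+1) * (P1 * m) * (P1 ^ d * (m * n) ^ r)"
      using assms by (intro mult_mono one_le_power) auto
    thus ?thesis using \<open>c > 0\<close> by (intro divide_right_mono) auto
  qed
  also have "\<dots> = p * (m * p / c) ^ (r+1) * (n * p / c) ^ r"
    by (simp add: p_def d_def power_mult_distrib power_divide power_add field_simps power_mult power2_eq_square)
  also have "\<dots> \<le> p * (m / (2 * real (r+1)) * p / 4) ^ (r+1) * (n / (2 * real r) * p / 4) ^ r"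
  proof -
    have "n * p / c \<le> n / (2 * real r) * p / 4"
      using assms \<open>p \<ge> 0\<close> by (simp add: c_def field_simps mult_left_mono)
    hence "(n * p / c) ^ r \<le> (n / (2 * real r) * p / 4) ^ r"
      using assms \<open>p \<ge> 0\<close> \<open>c > 0\<close> by (intro power_mono) auto
    moreover have "0 \<le> p * (m * p / c) ^ (r+1)" using assms \<open>p \<ge> 0\<close> \<open>c > 0\<close> by simp
    ultimately have "p * (m * p / c) ^ (r+1) * (n * p / c) ^ r \<le> p * (m * p / c) ^ (r+1) * (n / (2 * real r) * p / 4) ^ r"
      by (rule mult_left_mono)
    moreover have "m * p / c = m / (2 * real (r+1)) * p / 4" by (simp add: c_def field_simps)
    ultimately show ?thesis by (simp only:)
  qed
  finally show ?thesis .
qed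

lemma real_nat_ceiling_minus_one_le:
  assumes "0 \<le> k"
  shows "real (nat \<lceil>k\<rceil> - 1) \<le> k"
proof (cases "nat \<lceil>k\<rceil> = 0")
  case False
  hence "1 \<le> nat \<lceil>k\<rceil>" by linarith
  hence "real (nat \<lceil>k\<rceil> - 1) = real (nat \<lceil>k\<rceil>) - 1" by (simp only: of_nat_diff of_nat_1)
  also have "real (nat \<lceil>k\<rceil>) = of_int \<lceil>k\<rceil>" using assms by simp
  finally show ?thesis by linarith
qed (use assms in simp)

lemma sum_step_failure_le_for_edge_probability:
  fixes m n r :: nat and C1 P1 t :: real
  defines "d \<equiv> 2*r+1" and "p \<equiv> C1 * P1"
    and "NU \<equiv> real m / (2 * real (r+1))" and "NV \<equiv> real n / (2 * real r)"
  assumes "r \<ge> 1" "C1 \<ge> 1" "P1 \<ge> 0" "C1 * P1 \<le> 1" "m \<le> n"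
    and "P1 * real m \<ge> t^4" "P1 ^ d * (real m * real n) ^ r \<ge> 1" "12 * real (r+1) \<le> t^4"
  shows "(\<Sum>j<2*r+2. step_failure NU NV r p j) \<le> real (2*r+2) * exp (- (t^4 / (32 * real (r+1)) ^ d))"
proof -
  define \<Phi> where "\<Phi> = t^4 / (32 * real (r+1)) ^ d"
  have "real m \<le> real n" using assms(9) by simp
  note targets = layer_targets_ge[OF assms(5-7) of_nat_0_le_iff this assms(10,12), folded NU_def NV_def p_def]
  have "32 * real (r+1) \<le> (32 * real (r+1)) ^ d" by (rule self_le_power) (auto simp: d_def)
  hence "\<Phi> \<le> t^4 / (32 * real (r+1))" unfolding \<Phi>_def by (intro divide_left_mono) auto
  moreover have "min (NU * p / 4) (NV * p / 4) = NU * p / 4" using targets(2) by (rule min_absorb1)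
  ultimately have "\<Phi> \<le> min (NU * p / 4) (NV * p / 4) / 4" using targets(3) by linarith
  moreover have "\<Phi> \<le> p * (NU * p / 4) ^ (r+1) * (NV * p / 4) ^ r"
    using layer_target_product_ge[OF assms(5-7) of_nat_0_le_iff \<open>real m \<le> real n\<close> assms(10) assms(11)[unfolded d_def]]
    by (simp add: \<Phi>_def NU_def NV_def p_def d_def)
  moreover have "NV * p / 4 \<ge> 1" using targets(1,2) by linarith
  moreover have "0 \<le> NU" "0 \<le> NV" "0 \<le> \<Phi>" "0 \<le> p" "p \<le> 1"
    using assms(6-8) by (simp_all add: NU_def NV_def \<Phi>_def p_def)
  ultimately show ?thesis using sum_step_failure_le targets(1) unfolding \<Phi>_def by blast
qed

lemma prob_not_all_many_paths_le_inverse: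
  fixes n m r :: nat and C1 P1 :: real
  defines "d \<equiv> 2*r+1" and "t \<equiv> log 2 (real n)"
  assumes "r \<ge> 1" "C1 \<ge> 1" "n \<ge> 2" "m \<le> n" "P1 \<ge> 0" "C1 * P1 \<le> 1"
    and "P1 * real m \<ge> t^4" "P1 ^ d * (real m * real n) ^ r \<ge> 1"
    and large1: "2 * real (r+1) * (3 + real d * C1 * t) \<le> t^4"
    and large2: "(32 * real (r+1)) ^ d * (5 + 3 * real d * C1 + 2 * real r) * t^2 \<le> t^4"
  shows "measure_pmf.prob (random_bip m n (C1 * P1))
     {G. \<not> (\<forall>x<n. \<forall>y<n. x \<noteq> y \<longrightarrow> many_disjoint_paths m n G (2*r+2) (C1 * t) (Inr x) (Inr y))}
     \<le> 1 / real n"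
proof -
  define K where "K = (2*r+1) * (nat \<lceil>C1 * t\<rceil> - 1)"
  have "t \<ge> 1" using assms(5) by (simp add: t_def)
  have "ln (real n) \<le> t" using \<open>t \<ge> 1\<close> ln_2_less_1 assms(5) by (simp add: t_def log_def divide_simps)
  have "real K = real d * real (nat \<lceil>C1 * t\<rceil> - 1)" unfolding K_def d_def by (simp only: of_nat_mult)
  also have "\<dots> \<le> real d * (C1 * t)"
    using real_nat_ceiling_minus_one_le[of "C1 * t"] \<open>t \<ge> 1\<close> assms(4) by (intro mult_left_mono) auto
  finally have "real K \<le> real d * C1 * t" by (simp add: mult.assoc)
  hence "2 * real (r+1) * (3 + real K) \<le> 2 * real (r+1) * (3 + real d * C1 * t)" by (intro mult_left_mono) auto
  hence "2 * real (r+1) * (3 + real K) \<le> t^4" using large1 by linarith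
  have "3 \<le> real d * C1 * t"
    using assms(3,4) \<open>t \<ge> 1\<close> mult_mono[of 3 "real d * C1" 1 t] mult_mono[of 3 "real d" 1 C1] by (simp add: d_def)
  hence "2 * real (r+1) * 6 \<le> 2 * real (r+1) * (3 + real d * C1 * t)" by (intro mult_left_mono) auto
  hence "12 * real (r+1) \<le> t^4" using large1 by linarith
  have "P1 \<le> 1" using assms(8) mult_right_mono[OF assms(4) assms(7)] by simp
  hence "t^4 \<le> real m" using assms(9) mult_right_mono[of P1 1 "real m"] by simp
  have "measure_pmf.prob (random_bip m n (C1 * P1))
     {G. \<not> (\<forall>x<n. \<forall>y<n. x \<noteq> y \<longrightarrow> many_disjoint_paths m n G (2*r+2) (C1 * t) (Inr x) (Inr y))}
     \<le> real n * real n * (real (m + n) + 1) ^ K *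
        (\<Sum>j<2*r+2. step_failure (real m / (2 * real (r+1))) (real n / (2 * real r)) r (C1 * P1) j)"
    unfolding K_def
    using layer_sizes_le[OF assms(3) \<open>t^4 \<le> real m\<close> assms(6) \<open>2 * real (r+1) * (3 + real K) \<le> t^4\<close>,
        unfolded K_def] assms(4,7,8)
    by (intro prob_not_all_many_paths_le) simp_all
  also have "\<dots> \<le> real n * real n * (real (m + n) + 1) ^ K * (real (2*r+2) * exp (- (t^4 / (32 * real (r+1)) ^ d)))"
    using sum_step_failure_le_for_edge_probability[OF assms(3,4,7,8,6,9) _ \<open>12 * real (r+1) \<le> t^4\<close>] assms(10)
    by (intro mult_left_mono) (auto simp: d_def)
  also have "\<dots> \<le> 1 / real n"
  proof (rule union_bound_le_inverse[where A = "real d * C1"])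
    show "(5 + 3 * (real d * C1) + 2 * real r) * t^2 \<le> t^4 / (32 * real (r+1)) ^ d"
      using large2 by (subst pos_le_divide_eq) (auto simp: mult_ac)
  qed (use assms(4-6) \<open>t \<ge> 1\<close> \<open>ln (real n) \<le> t\<close> \<open>real K \<le> real d * C1 * t\<close> in auto)
  finally show ?thesis .
qed

lemma log2_le_four_sqrt:
  assumes "z \<ge> (1::real)"
  shows "log 2 z \<le> 4 * sqrt z"
proof -
  have "ln (sqrt z) \<le> sqrt z - 1" using assms by (intro ln_le_minus_one) simp
  moreover have "ln (sqrt z) = ln z / 2" using assms by (simp add: ln_sqrt)
  moreover have "ln (1/2::real) \<le> 1/2 - 1" by (rule ln_le_minus_one) simp
  hence "ln (2::real) \<ge> 1/2" by (simp add: ln_div)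
  ultimately have "ln z / ln 2 \<le> (2 * sqrt z) / (1/2)"
    using assms by (intro frac_le) auto
  thus ?thesis by (simp add: log_def)
qed

lemma edge_probability_power_eq:
  fixes M N :: real and r :: nat
  defines "d \<equiv> 2*r+1"
  assumes "M > 0" "N > 0" "log 2 (M*N) > 0"
  shows "(log 2 (M*N) powr (1/real d) / (M powr ((real d - 1)/(2*real d)) * N powr ((real d - 1)/(2*real d)))) ^ d
           * (M*N)^r = log 2 (M*N)"
proof -
  define X where "X = log 2 (M*N)"
  have e: "(real d - 1)/(2*real d) = real r / real d" by (simp add: d_def field_simps)
  have "real d > 0" by (simp add: d_def)
  moreover have "X > 0" using assms(4) by (simp add: X_def)
  ultimately have "(X powr (1/real d)) ^ d = X" "(M powr (real r / real d)) ^ d = M ^ r"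
      "(N powr (real r / real d)) ^ d = N ^ r"
    using assms(2,3) by (simp_all add: powr_power powr_realpow)
  thus ?thesis unfolding e X_def[symmetric] using assms(2,3) by (simp add: power_divide power_mult_distrib)
qed

lemma scaled_edge_probability_le_one:
  fixes C1 P1 z :: real and r d :: nat
  assumes "C1 \<ge> 1" "z \<ge> 16 * C1 ^ (2*d)" "r \<ge> 1" "d \<ge> 1" "P1 ^ d * z ^ r = log 2 z" "P1 \<ge> 0"
  shows "C1 * P1 \<le> 1"
proof -
  have "C1 ^ (2*d) \<ge> 1" using assms(1) by (rule one_le_power)
  hence "z \<ge> 1" using assms(2) by linarith
  have "sqrt z > 0" using \<open>z \<ge> 1\<close> by simp
  have "16 * C1 ^ (2*d) = (4 * C1 ^ d)^2"
    by (simp add: power_mult_distrib power_mult[symmetric] mult.commute)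
  hence "sqrt (16 * C1 ^ (2*d)) = \<bar>4 * C1 ^ d\<bar>" by (simp only: real_sqrt_abs)
  hence "sqrt (16 * C1 ^ (2*d)) = 4 * C1 ^ d" using assms(1) by simp
  hence "sqrt z \<ge> 4 * C1 ^ d" using assms(2) real_sqrt_le_iff by metis
  have "z ^ r \<ge> z" using \<open>z \<ge> 1\<close> assms(3) by (metis power_increasing power_one_right)
  have "(C1 * P1) ^ d = C1 ^ d * (log 2 z / z ^ r)"
    using assms(5) \<open>z \<ge> 1\<close> by (simp add: power_mult_distrib eq_divide_eq)
  also have "\<dots> \<le> C1 ^ d * (4 * sqrt z / z)"
  proof -
    have "log 2 z / z ^ r \<le> log 2 z / z" using \<open>z ^ r \<ge> z\<close> \<open>z \<ge> 1\<close> by (intro divide_left_mono) auto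
    also have "\<dots> \<le> 4 * sqrt z / z" using log2_le_four_sqrt[OF \<open>z \<ge> 1\<close>] \<open>z \<ge> 1\<close> by (intro divide_right_mono) auto
    finally show ?thesis using assms(1) by (intro mult_left_mono) auto
  qed
  also have "\<dots> = 4 * C1 ^ d / sqrt z"
    using \<open>sqrt z > 0\<close> \<open>z \<ge> 1\<close> by (simp add: field_simps flip: real_sqrt_mult)
  also have "\<dots> \<le> 1" using \<open>sqrt z \<ge> 4 * C1 ^ d\<close> \<open>sqrt z > 0\<close> by (simp add: divide_le_eq)
  finally show ?thesis using assms(1,4,6) by (simp add: power_le_one_iff)
qed

lemma prob_all_many_paths_ge:
  fixes m n r :: nat and C1 :: real
  defines "d \<equiv> 2*r+1" and "t \<equiv> log 2 (real n)"
  defines "P1 \<equiv> log 2 (real m * real n) powr (1 / real d) /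
              (real m powr ((real d - 1) / (2 * real d)) * real n powr ((real d - 1) / (2 * real d)))"
  assumes "r \<ge> 1" "C1 \<ge> 1" "n \<ge> 2" "real n \<ge> 16 * C1 ^ (2*d)"
    and "P1 * real n \<ge> P1 * real m" "P1 * real m \<ge> t^4"
    and "2 * real (r+1) * (3 + real d * C1 * t) \<le> t^4"
    and "(32 * real (r+1)) ^ d * (5 + 3 * real d * C1 + 2 * real r) * t^2 \<le> t^4"
  shows "measure_pmf.prob (random_bip m n (C1 * P1))
           {G. \<forall>x<n. \<forall>y<n. x \<noteq> y \<longrightarrow> many_disjoint_paths m n G (d + 1) (C1 * t) (Inr x) (Inr y)}
         \<ge> 1 - 1 / real n"
proof -
  have "t \<ge> 1" using assms(6) by (simp add: t_def)
  have "P1 \<ge> 0" by (simp add: P1_def)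
  have "P1 * real m > 0" using assms(9) \<open>t \<ge> 1\<close> one_le_power[of t 4] by linarith
  hence "P1 > 0" "m \<ge> 1" using \<open>P1 \<ge> 0\<close> by (auto simp: zero_less_mult_iff)
  hence "m \<le> n" using assms(8) by simp
  have "real m * real n \<ge> real n" using \<open>m \<ge> 1\<close> mult_right_mono[of 1 "real m" "real n"] by simp
  hence "log 2 (real m * real n) \<ge> t" using assms(6) by (simp add: t_def)
  hence "log 2 (real m * real n) > 0" using \<open>t \<ge> 1\<close> by linarith
  hence power_eq: "P1 ^ d * (real m * real n) ^ r = log 2 (real m * real n)"
    unfolding P1_def d_def using \<open>m \<ge> 1\<close> assms(6) by (intro edge_probability_power_eq) auto
  have "P1 ^ d * (real m * real n) ^ r \<ge> 1" using power_eq \<open>log 2 (real m * real n) \<ge> t\<close> \<open>t \<ge> 1\<close> by linarith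
  have "C1 * P1 \<le> 1"
    using scaled_edge_probability_le_one[OF assms(5) _ assms(4) _ power_eq \<open>P1 \<ge> 0\<close>]
      \<open>real m * real n \<ge> real n\<close> assms(7) by (simp add: d_def)
  have "measure_pmf.prob (random_bip m n (C1 * P1))
     {G. \<not> (\<forall>x<n. \<forall>y<n. x \<noteq> y \<longrightarrow> many_disjoint_paths m n G (2*r+2) (C1 * t) (Inr x) (Inr y))} \<le> 1 / real n"
    using \<open>P1 \<ge> 0\<close> \<open>P1 ^ d * (real m * real n) ^ r \<ge> 1\<close> \<open>m \<le> n\<close> \<open>C1 * P1 \<le> 1\<close> assms(4-6,9-11)
    unfolding t_def d_def by (intro prob_not_all_many_paths_le_inverse) auto
  moreover have "d + 1 = 2*r+2" by (simp add: d_def)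
  ultimately show ?thesis
    using measure_pmf.prob_compl[of "{G. \<forall>x<n. \<forall>y<n. x \<noteq> y \<longrightarrow> many_disjoint_paths m n G (2*r+2) (C1 * t) (Inr x) (Inr y)}"
        "random_bip m n (C1 * P1)"]
    by (simp add: Compl_eq_Diff_UNIV[symmetric] Collect_neg_eq[symmetric])
qed

theorem lemma8:
  fixes d :: nat and c0 :: real and m :: "nat \<Rightarrow> nat" and C1 :: real and p1 :: "nat \<Rightarrow> real"
  assumes "odd d" and "d \<ge> 2" and "c0 \<ge> 1"
  defines "C1 \<equiv> 2 ^ (10 * d) * c0"
  defines "p1 \<equiv> (\<lambda>n. (log 2 (real (m n) * real n)) powr (1 / real d) /
              ((real (m n)) powr ((real d - 1) / (2 * real d)) * (real n) powr ((real d - 1) / (2 * real d))))"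
  assumes "eventually (\<lambda>n. p1 n * real n \<ge> p1 n * real (m n) \<and> p1 n * real (m n) \<ge> (log 2 (real n)) ^ 4) at_top"
  shows "\<exists>\<epsilon>>0. eventually (\<lambda>n.
           measure_pmf.prob (random_bip (m n) n (C1 * p1 n))
             {G. \<forall>x<n. \<forall>y<n. x \<noteq> y \<longrightarrow>
                  many_disjoint_paths (m n) n G (d + 1) (2 ^ (10 * d) * c0 * log 2 (real n)) (Inr x) (Inr y)}
           \<ge> 1 - (real n) powr (- \<epsilon>)) at_top"
proof (intro exI conjI)
  obtain r where d: "d = 2*r+1" using assms(1) oddE by blast
  have "r \<ge> 1" using assms(2) d by simp
  have "C1 \<ge> 1" using assms(3) mult_mono[of 1 "2 ^ (10 * d)" 1 c0] by (simp add: C1_def)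
  have "eventually (\<lambda>n::nat. 2 * real (r+1) * (3 + real d * C1 * log 2 (real n)) \<le> (log 2 (real n))^4
      \<and> (32 * real (r+1)) ^ d * (5 + 3 * real d * C1 + 2 * real r) * (log 2 (real n))^2 \<le> (log 2 (real n))^4
      \<and> real n \<ge> max 2 (16 * C1 ^ (2*d))) at_top"
    by (intro eventually_conj; real_asymp)
  with assms(6) show "eventually (\<lambda>n. measure_pmf.prob (random_bip (m n) n (C1 * p1 n))
             {G. \<forall>x<n. \<forall>y<n. x \<noteq> y \<longrightarrow>
                  many_disjoint_paths (m n) n G (d + 1) (2 ^ (10 * d) * c0 * log 2 (real n)) (Inr x) (Inr y)}
           \<ge> 1 - (real n) powr (- 1)) at_top"
  proof (eventually_elim)
    case (elim n)
    then have "n \<ge> 2" by simp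
    then show ?case
      using prob_all_many_paths_ge[of r C1 n "m n"] elim \<open>r \<ge> 1\<close> \<open>C1 \<ge> 1\<close>
      by (simp add: d p1_def C1_def powr_minus_divide mult.assoc)
  qed
qed simp
end
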